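(* Let $G$ be a finite simple graph on $n$ vertices with maximum degree $\Delta \ge 1$, and let $\lambda_{2}$ be the second smallest Laplacian eigenvalue of $G$. Then \[ \mathrm{tw}(G) \ge \frac{n \lambda_{2}}{\Delta + \lambda_{2}} - 1, \] where $\mathrm{tw}(G)$ is the treewidth of $G$.
   Context: For a graph $G=(V,E)$ with $n$ vertices, the Laplacian matrix $L \in \mathbb{Z}^{V\times V}$ is given by $L(u,u)=\deg(u)$, $L(u,v)=-1$ if $\{u,v\}\in E$, and $L(u,v)=0$ otherwise (for $u \ne v$). The Laplacian eigenvalues are the eigenvalues of $L$, listed in non-decreasing order as $\lambda_1 \le \lambda_2 \le \dots \le \lambda_n$. Treewidth is the standard notion: the minimum, over all tree decompositions of $G$, of the maximum bag size minus one. *)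

theory Defs
  imports "Jordan_Normal_Form.Char_Poly" "HOL-Library.Multiset"
begin

definition simple_graph :: "nat \<Rightarrow> (nat \<Rightarrow> nat \<Rightarrow> bool) \<Rightarrow> bool" where
  "simple_graph n E \<longleftrightarrow> (\<forall>u v. E u v \<longrightarrow> E v u) \<and> (\<forall>u. \<not> E u u)
      \<and> (\<forall>u v. E u v \<longrightarrow> u < n \<and> v < n)"

definition degree_g :: "nat \<Rightarrow> (nat \<Rightarrow> nat \<Rightarrow> bool) \<Rightarrow> nat \<Rightarrow> nat" where
  "degree_g n E u = card {v. v < n \<and> E u v}"

definition max_degree :: "nat \<Rightarrow> (nat \<Rightarrow> nat \<Rightarrow> bool) \<Rightarrow> nat" where
  "max_degree n E = Max (degree_g n E ` {0..<n})"

definition laplacian :: "nat \<Rightarrow> (nat \<Rightarrow> nat \<Rightarrow> bool) \<Rightarrow> real mat" where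
  "laplacian n E = mat n n (\<lambda>(u, v). if u = v then real (degree_g n E u)
                                      else if E u v then -1 else 0)"

text \<open>Laplacian eigenvalues with multiplicity (roots of the characteristic polynomial),
  listed in non-decreasing order; lambda_k is the (k-1)-th entry of the list.\<close>
definition laplacian_eigenvalues :: "nat \<Rightarrow> (nat \<Rightarrow> nat \<Rightarrow> bool) \<Rightarrow> real list" where
  "laplacian_eigenvalues n E = sorted_list_of_multiset (proots (char_poly (laplacian n E)))"

definition lambda2 :: "nat \<Rightarrow> (nat \<Rightarrow> nat \<Rightarrow> bool) \<Rightarrow> real" where
  "lambda2 n E = laplacian_eigenvalues n E ! 1"

definition connected_on :: "(nat \<Rightarrow> nat \<Rightarrow> bool) \<Rightarrow> nat set \<Rightarrow> bool" where
  "connected_on F S \<longleftrightarrow> (\<forall>a\<in>S. \<forall>b\<in>S. (\<lambda>x y. F x y \<and> x \<in> S \<and> y \<in> S)\<^sup>*\<^sup>* a b)"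

definition is_cycle :: "(nat \<Rightarrow> nat \<Rightarrow> bool) \<Rightarrow> nat list \<Rightarrow> bool" where
  "is_cycle F cs \<longleftrightarrow> length cs \<ge> 3 \<and> distinct cs
      \<and> (\<forall>i. Suc i < length cs \<longrightarrow> F (cs ! i) (cs ! Suc i)) \<and> F (last cs) (hd cs)"

definition is_tree :: "nat \<Rightarrow> (nat \<Rightarrow> nat \<Rightarrow> bool) \<Rightarrow> bool" where
  "is_tree m F \<longleftrightarrow> m \<ge> 1 \<and> simple_graph m F \<and> connected_on F {0..<m}
      \<and> (\<nexists>cs. is_cycle F cs)"

definition tree_decomposition ::
  "nat \<Rightarrow> (nat \<Rightarrow> nat \<Rightarrow> bool) \<Rightarrow> nat \<Rightarrow> (nat \<Rightarrow> nat \<Rightarrow> bool) \<Rightarrow> (nat \<Rightarrow> nat set) \<Rightarrow> bool" where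
  "tree_decomposition n E m F B \<longleftrightarrow> is_tree m F
      \<and> (\<forall>t<m. B t \<subseteq> {0..<n})
      \<and> (\<forall>v<n. \<exists>t<m. v \<in> B t)
      \<and> (\<forall>u v. E u v \<longrightarrow> (\<exists>t<m. u \<in> B t \<and> v \<in> B t))
      \<and> (\<forall>v<n. connected_on F {t. t < m \<and> v \<in> B t})"

definition decomposition_width :: "nat \<Rightarrow> (nat \<Rightarrow> nat set) \<Rightarrow> nat" where
  "decomposition_width m B = Max ((\<lambda>t. card (B t)) ` {0..<m}) - 1"

definition treewidth :: "nat \<Rightarrow> (nat \<Rightarrow> nat \<Rightarrow> bool) \<Rightarrow> nat" where
  "treewidth n E = (LEAST k. \<exists>m F B. tree_decomposition n E m F B \<and> decomposition_width m B = k)"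

end

theory Submission
  imports Defs "Jordan_Normal_Form.Schur_Decomposition"
begin

text \<open>Take a tree decomposition of optimal width. Walking along the tree towards a neighbouring
  part that holds more than half of the vertices outside the current bag, one finds a set S
  inside a single bag, hence with |S| \<le> tw + 1, together with a split of the remaining vertices
  into three classes without edges between different classes, each containing at most half of
  them. The class sizes then satisfy the triangle inequality, so there are unit vectors in the
  plane, one per class, whose sum weighted by the class sizes vanishes. Assigning to every
  vertex outside S the vector of its class, and 0 to the vertices of S, gives two test vectors
  orthogonal to the all-ones vector with total squared norm n - |S|; only edges at S contribute
  to their Laplacian energy, which is therefore at most |S| \<Delta>. The variational bound for
  \<lambda>2 yields \<lambda>2 (n - |S|) \<le> |S| \<Delta>, which rearranges to the claim.\<close>

section \<open>Spectral theorem for real symmetric matrices\<close>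

lemma conjugate_real_vec [simp]: "conjugate (v :: real vec) = v"
  by (rule eq_vecI) auto

lemma scalar_prod_self_pos_real: "(v :: real vec) \<in> carrier_vec n \<Longrightarrow> v \<noteq> 0\<^sub>v n \<Longrightarrow> v \<bullet> v > 0"
  by (metis conjugate_real_vec conjugate_square_greater_0_vec)

definition vec_normalize :: "real vec \<Rightarrow> real vec" where
  "vec_normalize v = (1 / sqrt (v \<bullet> v)) \<cdot>\<^sub>v v"

lemma scalar_prod_vec_normalize:
  assumes "v \<in> carrier_vec n" "w \<in> carrier_vec n"
  shows "vec_normalize v \<bullet> vec_normalize w = (v \<bullet> w) / (sqrt (v \<bullet> v) * sqrt (w \<bullet> w))"
  using assms unfolding vec_normalize_def
  by (simp add: smult_scalar_prod_distrib scalar_prod_smult_distrib)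

lemma vec_normalize_unit:
  assumes "v \<in> carrier_vec n" "v \<noteq> 0\<^sub>v n"
  shows "vec_normalize v \<bullet> vec_normalize v = 1"
  using scalar_prod_vec_normalize[OF assms(1) assms(1)] scalar_prod_self_pos_real[OF assms]
  by (simp add: real_sqrt_mult[symmetric] del: real_sqrt_mult)

definition orthonormal_mat :: "nat \<Rightarrow> real mat \<Rightarrow> bool" where
  "orthonormal_mat n U \<longleftrightarrow> U \<in> carrier_mat n n \<and> transpose_mat U * U = 1\<^sub>m n"

lemma orthonormal_mat_right_inverse: "orthonormal_mat n U \<Longrightarrow> U * transpose_mat U = 1\<^sub>m n"
  using mat_mult_left_right_inverse[of "transpose_mat U" n U] unfolding orthonormal_mat_def by auto

lemma orthonormal_mat_transpose_mult_vec:
  assumes "orthonormal_mat n U" "x \<in> carrier_vec n"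
  shows "U *\<^sub>v (transpose_mat U *\<^sub>v x) = x" and "transpose_mat U *\<^sub>v (U *\<^sub>v x) = x"
  using assms orthonormal_mat_right_inverse[OF assms(1)] unfolding orthonormal_mat_def
  by (auto simp: assoc_mult_mat_vec[of _ n n _ n, symmetric])

lemma orthonormal_mat_scalar_prod:
  assumes "orthonormal_mat n U" "x \<in> carrier_vec n"
  shows "(transpose_mat U *\<^sub>v x) \<bullet> (transpose_mat U *\<^sub>v x) = x \<bullet> x"
proof -
  have U: "U \<in> carrier_mat n n" using assms(1) unfolding orthonormal_mat_def by auto
  have "(transpose_mat U *\<^sub>v x) \<bullet> (transpose_mat U *\<^sub>v x) = x \<bullet> (U *\<^sub>v (transpose_mat U *\<^sub>v x))"
    using transpose_vec_mult_scalar[OF U _ assms(2), of "transpose_mat U *\<^sub>v x"] U assms(2) by auto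
  then show ?thesis using orthonormal_mat_transpose_mult_vec[OF assms] by simp
qed

lemma orthonormal_mat_of_cols:
  assumes ws: "set ws \<subseteq> carrier_vec n" "corthogonal ws" "length ws = n"
  shows "orthonormal_mat n (mat_of_cols n (map vec_normalize ws))"
proof -
  define W where "W = mat_of_cols n (map vec_normalize ws)"
  have wsi: "ws ! i \<in> carrier_vec n" if "i < n" for i using ws that by auto
  have orth: "ws ! i \<bullet> ws ! j = 0 \<longleftrightarrow> i \<noteq> j" if "i < n" "j < n" for i j
    using ws that unfolding corthogonal_def by auto
  have colW: "col W j = vec_normalize (ws ! j)" if "j < n" for j
    unfolding W_def using that ws wsi[OF that] by (auto simp: col_mat_of_cols vec_normalize_def)
  have "col W i \<bullet> col W j = (if i = j then 1 else 0)" if "i < n" "j < n" for i j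
  proof (cases "i = j")
    case True
    have "ws ! i \<noteq> 0\<^sub>v n" using orth[OF that(1) that(1)] by auto
    then show ?thesis using vec_normalize_unit[OF wsi[OF that(1)]] colW that True by auto
  next
    case False
    then show ?thesis
      using scalar_prod_vec_normalize[OF wsi[OF that(1)] wsi[OF that(2)]] orth[OF that] colW that
        by auto
  qed
  moreover have "W \<in> carrier_mat n n" unfolding W_def using ws by auto
  ultimately show ?thesis
    unfolding orthonormal_mat_def W_def[symmetric] by (auto intro!: eq_matI)
qed

lemma orthonormal_completion:
  assumes v: "v \<in> carrier_vec n" and v1: "v \<bullet> v = 1"
  shows "\<exists>W. orthonormal_mat n W \<and> col W 0 = v"
proof -
  interpret cof_vec_space n "TYPE(real)" .
  have v0: "v \<noteq> 0\<^sub>v n" using v1 by auto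
  have n: "n > 0" using v v1 by (cases n) (auto simp: scalar_prod_def)
  define b where "b = basis_completion v"
  from basis_completion[OF v v0, folded b_def]
  have dist_b: "distinct b" and indep: "\<not> lin_dep (set b)" and b: "set b \<subseteq> carrier_vec n"
    and hdb: "hd b = v" and len_b: "length b = n" by auto
  from hdb len_b n obtain vs where bv: "b = v # vs" by (cases b) auto
  define ws where "ws = gram_schmidt n b"
  from gram_schmidt_result[OF b dist_b indep ws_def]
  have ws: "set ws \<subseteq> carrier_vec n" "corthogonal ws" "length ws = n" by (auto simp: len_b)
  have "ws ! 0 = v"
    using gram_schmidt_hd[OF v, of vs, folded bv ws_def] ws(3) n by (cases ws) auto
  then have "col (mat_of_cols n (map vec_normalize ws)) 0 = v"
    using ws n v v1 by (simp add: col_mat_of_cols vec_normalize_def)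
  then show ?thesis using orthonormal_mat_of_cols[OF ws] by blast
qed

lemma complexified_symmetric_eigenvalue_real:
  fixes A :: "real mat"
  assumes A: "A \<in> carrier_mat n n" and sym: "transpose_mat A = A"
    and ev: "eigenvalue (map_mat complex_of_real A) z"
  shows "z \<in> \<real>"
proof -
  let ?C = "map_mat complex_of_real A"
  obtain v where v: "v \<in> carrier_vec n" and v0: "v \<noteq> 0\<^sub>v n" and Cv: "?C *\<^sub>v v = z \<cdot>\<^sub>v v"
    using ev A unfolding eigenvalue_def eigenvector_def by auto
  have symA: "A $$ (i, j) = A $$ (j, i)" if "i < n" "j < n" for i j
    using sym A that by (metis carrier_matD index_transpose_mat(1))
  define s where "s = (\<Sum>i<n. cnj (v $ i) * (?C *\<^sub>v v) $ i)"
  define q where "q = (\<Sum>i<n. cnj (v $ i) * v $ i)"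
  have sq: "s = z * q" unfolding s_def q_def Cv using v
    by (auto simp: sum_distrib_left intro!: sum.cong)
  have Cvi: "(?C *\<^sub>v v) $ i = (\<Sum>j<n. of_real (A $$ (i, j)) * v $ j)" if "i < n" for i
    using that v A by (auto simp: scalar_prod_def lessThan_atLeast0 intro!: sum.cong)
  have s: "s = (\<Sum>i<n. \<Sum>j<n. cnj (v $ i) * of_real (A $$ (i, j)) * v $ j)"
    unfolding s_def by (auto simp: Cvi sum_distrib_left mult.assoc intro!: sum.cong)
  \<comment> \<open>the Hermitian form of a real symmetric matrix is real\<close>
  have "cnj s = (\<Sum>i<n. \<Sum>j<n. v $ i * of_real (A $$ (i, j)) * cnj (v $ j))"
    unfolding s by (simp add: cnj_sum)
  also have "\<dots> = (\<Sum>j<n. \<Sum>i<n. v $ i * of_real (A $$ (i, j)) * cnj (v $ j))"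
    by (rule sum.swap)
  also have "\<dots> = s" unfolding s by (auto simp: symA mult_ac intro!: sum.cong)
  finally have s_real: "cnj s = s" .
  have q: "q = of_real (\<Sum>i<n. (cmod (v $ i))\<^sup>2)" unfolding q_def
    by (simp add: complex_norm_square mult.commute del: of_real_power)
  obtain i where i: "i < n" "v $ i \<noteq> 0"
    using v0 v by (metis carrier_vecD eq_vecI index_zero_vec(1) index_zero_vec(2))
  have "(cmod (v $ i))\<^sup>2 \<le> (\<Sum>i<n. (cmod (v $ i))\<^sup>2)" by (rule member_le_sum) (use i in auto)
  moreover have "(cmod (v $ i))\<^sup>2 > 0" using i by simp
  ultimately have "q \<noteq> 0" unfolding q of_real_eq_0_iff by linarith
  then have "z = s / q" using sq by simp
  moreover have "cnj q = q" unfolding q by (simp only: complex_cnj_complex_of_real)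
  ultimately have "cnj z = z" using s_real by simp
  then show ?thesis by (simp add: Reals_cnj_iff)
qed

lemma real_symmetric_has_eigenvalue:
  fixes A :: "real mat"
  assumes A: "A \<in> carrier_mat n n" and n: "n > 0" and sym: "transpose_mat A = A"
  shows "\<exists>e. eigenvalue A e"
proof -
  let ?C = "map_mat complex_of_real A"
  have C: "?C \<in> carrier_mat n n" using A by auto
  have cp: "char_poly ?C = map_poly of_real (char_poly A)"
    by (rule of_real_hom.char_poly_hom[OF A])
  have "degree (char_poly ?C) = n" using degree_monic_char_poly[OF C] by auto
  then have "\<not> constant (poly (char_poly ?C))" using n by (simp add: constant_degree)
  then obtain z where z: "poly (char_poly ?C) z = 0" using fundamental_theorem_of_algebra by blast
  then have "z \<in> \<real>"
    using complexified_symmetric_eigenvalue_real[OF A sym] eigenvalue_root_char_poly[OF C] by auto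
  then have zr: "z = of_real (Re z)" by (simp add: complex_is_Real_iff)
  have "of_real (poly (char_poly A) (Re z)) = (0 :: complex)"
    using z unfolding cp by (subst (asm) zr) (simp add: of_real_hom.poly_map_poly)
  then have "poly (char_poly A) (Re z) = 0" by simp
  then show ?thesis using eigenvalue_root_char_poly[OF A] by auto
qed

lemma orthonormal_mat_mult:
  assumes U: "orthonormal_mat n U" and V: "orthonormal_mat n V"
  shows "orthonormal_mat n (U * V)"
proof -
  have Uc: "U \<in> carrier_mat n n" and Vc: "V \<in> carrier_mat n n"
    using U V unfolding orthonormal_mat_def by auto
  have "transpose_mat (U * V) * (U * V) = transpose_mat V * ((transpose_mat U * U) * V)"
    using Uc Vc by (simp add: transpose_mult assoc_mult_mat[of _ n n _ n _ n])
  also have "\<dots> = 1\<^sub>m n" using U V Vc unfolding orthonormal_mat_def by simp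
  finally show ?thesis using Uc Vc unfolding orthonormal_mat_def by auto
qed

lemma orthonormal_mat_four_block:
  assumes "orthonormal_mat m U"
  shows "orthonormal_mat (Suc m) (four_block_mat (1\<^sub>m 1) (0\<^sub>m 1 m) (0\<^sub>m m 1) U)"
proof -
  have U: "U \<in> carrier_mat m m" using assms unfolding orthonormal_mat_def by auto
  have "transpose_mat (four_block_mat (1\<^sub>m 1) (0\<^sub>m 1 m) (0\<^sub>m m 1) U) =
      four_block_mat (1\<^sub>m 1) (0\<^sub>m 1 m) (0\<^sub>m m 1) (transpose_mat U)"
    by (subst transpose_four_block_mat) (use U in auto)
  then have "transpose_mat (four_block_mat (1\<^sub>m 1) (0\<^sub>m 1 m) (0\<^sub>m m 1) U) *
      four_block_mat (1\<^sub>m 1) (0\<^sub>m 1 m) (0\<^sub>m m 1) U =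
      four_block_mat (1\<^sub>m 1) (0\<^sub>m 1 m) (0\<^sub>m m 1) (transpose_mat U * U)"
    by (simp only:) (subst mult_four_block_mat, use U in auto)
  then show ?thesis
    using assms four_block_one_mat[of 1 m] U unfolding orthonormal_mat_def by auto
qed

lemma orthonormal_mat_col_scalar_prod:
  assumes "orthonormal_mat n W" "i < n" "j < n"
  shows "col W i \<bullet> col W j = (if i = j then 1 else 0)"
proof -
  have W: "W \<in> carrier_mat n n" and WW: "transpose_mat W * W = 1\<^sub>m n"
    using assms(1) unfolding orthonormal_mat_def by auto
  have "col W i \<bullet> col W j = (transpose_mat W * W) $$ (i, j)" using W assms(2,3) by auto
  also have "\<dots> = (if i = j then 1 else 0)" using WW assms(2,3) by simp
  finally show ?thesis .
qed

lemma transpose_mult_mult_index: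
  assumes W: "W \<in> carrier_mat n n" and A: "A \<in> carrier_mat n n" and ij: "i < n" "j < n"
  shows "(transpose_mat W * A * W) $$ (i, j) = col W i \<bullet> (A *\<^sub>v col W j)"
proof -
  have "transpose_mat W * A * W = transpose_mat W * (A * W)"
    using W A by (simp add: assoc_mult_mat[of _ n n _ n _ n])
  then show ?thesis using ij W A col_mult2[OF A W ij(2)] by simp
qed

lemma symmetric_scalar_prod_swap:
  fixes A :: "real mat"
  assumes A: "A \<in> carrier_mat n n" and sym: "transpose_mat A = A"
    and u: "u \<in> carrier_vec n" and w: "w \<in> carrier_vec n"
  shows "u \<bullet> (A *\<^sub>v w) = w \<bullet> (A *\<^sub>v u)"
proof -
  have "u \<bullet> (A *\<^sub>v w) = (transpose_mat A *\<^sub>v u) \<bullet> w"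
    using transpose_vec_mult_scalar[OF A w u] by simp
  then show ?thesis using sym A u w by (metis comm_scalar_prod mult_mat_vec_carrier)
qed

lemma orthonormal_deflation:
  fixes A :: "real mat"
  assumes A: "A \<in> carrier_mat (Suc m) (Suc m)" and sym: "transpose_mat A = A"
    and W: "orthonormal_mat (Suc m) W" and ev: "A *\<^sub>v col W 0 = e \<cdot>\<^sub>v col W 0"
  shows "\<exists>A3. A3 \<in> carrier_mat m m \<and> transpose_mat A3 = A3 \<and>
    transpose_mat W * A * W = four_block_mat (mat 1 1 (\<lambda>_. e)) (0\<^sub>m 1 m) (0\<^sub>m m 1) A3"
proof -
  let ?n = "Suc m"
  have Wc: "W \<in> carrier_mat ?n ?n" using W unfolding orthonormal_mat_def by auto
  have colW: "col W i \<in> carrier_vec ?n" for i using Wc unfolding carrier_vec_def by simp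
  define A' where "A' = transpose_mat W * A * W"
  have A'ij: "A' $$ (i, j) = col W i \<bullet> (A *\<^sub>v col W j)" if "i < ?n" "j < ?n" for i j
    unfolding A'_def using transpose_mult_mult_index[OF Wc A that] .
  have symA': "A' $$ (i, j) = A' $$ (j, i)" if "i < ?n" "j < ?n" for i j
    using A'ij that symmetric_scalar_prod_swap[OF A sym colW colW] by simp
  have A'i0: "A' $$ (i, 0) = (if i = 0 then e else 0)" if "i < ?n" for i
    using A'ij[OF that] ev orthonormal_mat_col_scalar_prod[OF W that] colW by simp
  define A3 where "A3 = mat m m (\<lambda>(i, j). A' $$ (Suc i, Suc j))"
  have "A' = four_block_mat (mat 1 1 (\<lambda>_. e)) (0\<^sub>m 1 m) (0\<^sub>m m 1) A3"
  proof (rule eq_matI)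
    fix i j assume "i < dim_row (four_block_mat (mat 1 1 (\<lambda>_. e)) (0\<^sub>m 1 m) (0\<^sub>m m 1) A3)"
      "j < dim_col (four_block_mat (mat 1 1 (\<lambda>_. e)) (0\<^sub>m 1 m) (0\<^sub>m m 1) A3)"
    then have i: "i < ?n" and j: "j < ?n" unfolding A3_def by auto
    show "A' $$ (i, j) = four_block_mat (mat 1 1 (\<lambda>_. e)) (0\<^sub>m 1 m) (0\<^sub>m m 1) A3 $$ (i, j)"
    proof (cases "i = 0 \<or> j = 0")
      case True
      then show ?thesis using i j A'i0[OF i] A'i0[OF j] symA'[OF i j] unfolding A3_def by auto
    next
      case False
      then obtain i' j' where "i = Suc i'" "j = Suc j'" by (cases i; cases j) auto
      then show ?thesis using i j unfolding A3_def by auto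
    qed
  qed (use Wc A in \<open>simp_all add: A'_def A3_def\<close>)
  moreover have "transpose_mat A3 = A3" unfolding A3_def by (rule eq_matI) (auto simp: symA')
  moreover have "A3 \<in> carrier_mat m m" unfolding A3_def by simp
  ultimately show ?thesis unfolding A'_def by blast
qed

lemma four_block_conjugate:
  fixes U D E :: "'a :: comm_ring_1 mat"
  assumes U: "U \<in> carrier_mat m m" and D: "D \<in> carrier_mat m m" and E: "E \<in> carrier_mat 1 1"
  defines "V \<equiv> four_block_mat (1\<^sub>m 1) (0\<^sub>m 1 m) (0\<^sub>m m 1) U"
  shows "V * four_block_mat E (0\<^sub>m 1 m) (0\<^sub>m m 1) D * transpose_mat V =
    four_block_mat E (0\<^sub>m 1 m) (0\<^sub>m m 1) (U * D * transpose_mat U)"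
proof -
  have E1: "1\<^sub>m 1 * E + 0\<^sub>m 1 1 = E" using E by simp
  have "transpose_mat V = four_block_mat (1\<^sub>m 1) (0\<^sub>m 1 m) (0\<^sub>m m 1) (transpose_mat U)"
    unfolding V_def by (subst transpose_four_block_mat) (use U in auto)
  moreover have "V * four_block_mat E (0\<^sub>m 1 m) (0\<^sub>m m 1) D =
      four_block_mat E (0\<^sub>m 1 m) (0\<^sub>m m 1) (U * D)"
    unfolding V_def by (subst mult_four_block_mat) (use U D E E1 in auto)
  ultimately show ?thesis
    by (simp only:) (subst mult_four_block_mat, use U D E in auto)
qed

lemma orthonormal_similarity_compose:
  assumes W: "orthonormal_mat n W" and A: "A \<in> carrier_mat n n"
    and V: "V \<in> carrier_mat n n" and D: "D \<in> carrier_mat n n"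
    and eq: "transpose_mat W * A * W = V * D * transpose_mat V"
  shows "A = (W * V) * D * transpose_mat (W * V)"
proof -
  have Wc: "W \<in> carrier_mat n n" using W unfolding orthonormal_mat_def by auto
  have mc: "X * Y \<in> carrier_mat n n" if "X \<in> carrier_mat n n" "Y \<in> carrier_mat n n" for X Y
    using that by auto
  have asc: "X * Y * Z = X * (Y * Z)"
    if "X \<in> carrier_mat n n" "Y \<in> carrier_mat n n" "Z \<in> carrier_mat n n" for X Y Z
    using that by auto
  have WT: "transpose_mat W \<in> carrier_mat n n" and VT: "transpose_mat V \<in> carrier_mat n n"
    using Wc V by auto
  have "A = (W * transpose_mat W) * A * (W * transpose_mat W)"
    using orthonormal_mat_right_inverse[OF W] A by simp
  also have "\<dots> = W * (transpose_mat W * A * W) * transpose_mat W"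
    using A Wc WT by (simp only: asc mc)
  also have "\<dots> = (W * V) * D * transpose_mat (W * V)"
    unfolding eq transpose_mult[OF Wc V] using Wc WT V VT D by (simp only: asc mc)
  finally show ?thesis .
qed

definition spectral_decomposition :: "nat \<Rightarrow> real mat \<Rightarrow> real mat \<Rightarrow> real mat \<Rightarrow> bool" where
  "spectral_decomposition n A U D \<longleftrightarrow>
     orthonormal_mat n U \<and> D \<in> carrier_mat n n \<and> diagonal_mat D \<and> A = U * D * transpose_mat U"

theorem real_symmetric_spectral_decomposition:
  fixes A :: "real mat"
  assumes "A \<in> carrier_mat n n" "transpose_mat A = A"
  shows "\<exists>U D. spectral_decomposition n A U D"
  unfolding spectral_decomposition_def
  using assms
proof (induct n arbitrary: A)
  case 0
  then have "A = 1\<^sub>m 0" by (intro eq_matI) auto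
  then show ?case by (intro exI[of _ "1\<^sub>m 0"]) (auto simp: diagonal_mat_def orthonormal_mat_def)
next
  case (Suc m A)
  let ?n = "Suc m"
  have A: "A \<in> carrier_mat ?n ?n" and symA: "transpose_mat A = A" using Suc by auto
  obtain e v0 where v0: "v0 \<in> carrier_vec ?n" "v0 \<noteq> 0\<^sub>v ?n" "A *\<^sub>v v0 = e \<cdot>\<^sub>v v0"
    using real_symmetric_has_eigenvalue[OF A _ symA] A unfolding eigenvalue_def eigenvector_def
      by auto
  have "vec_normalize v0 \<in> carrier_vec ?n" unfolding vec_normalize_def using v0 by simp
  then obtain W where W: "orthonormal_mat ?n W" "col W 0 = vec_normalize v0"
    using orthonormal_completion vec_normalize_unit[OF v0(1,2)] by blast
  have "A *\<^sub>v col W 0 = e \<cdot>\<^sub>v col W 0"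
    unfolding W(2) vec_normalize_def using v0 A
      by (simp add: mult_mat_vec smult_smult_assoc mult.commute)
  then obtain A3 where A3: "A3 \<in> carrier_mat m m" "transpose_mat A3 = A3"
    and blk: "transpose_mat W * A * W = four_block_mat (mat 1 1 (\<lambda>_. e)) (0\<^sub>m 1 m) (0\<^sub>m m 1) A3"
    using orthonormal_deflation[OF A symA W(1)] by auto
  obtain U3 D3 where U3: "orthonormal_mat m U3" and D3: "D3 \<in> carrier_mat m m" "diagonal_mat D3"
    and A3eq: "A3 = U3 * D3 * transpose_mat U3"
    using Suc.hyps[OF A3] by blast
  define V where "V = four_block_mat (1\<^sub>m 1) (0\<^sub>m 1 m) (0\<^sub>m m 1) U3"
  define D where "D = four_block_mat (mat 1 1 (\<lambda>_. e)) (0\<^sub>m 1 m) (0\<^sub>m m 1) D3"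
  have U3c: "U3 \<in> carrier_mat m m" using U3 unfolding orthonormal_mat_def by auto
  have V: "orthonormal_mat ?n V" unfolding V_def by (rule orthonormal_mat_four_block[OF U3])
  have Vc: "V \<in> carrier_mat ?n ?n" and D: "D \<in> carrier_mat ?n ?n"
    unfolding V_def D_def using U3c D3 by auto
  have VDV: "transpose_mat W * A * W = V * D * transpose_mat V"
    unfolding blk A3eq V_def D_def by (rule four_block_conjugate[symmetric]) (use U3c D3 in auto)
  have "A = (W * V) * D * transpose_mat (W * V)"
    by (rule orthonormal_similarity_compose[OF W(1) A Vc D VDV])
  moreover have "diagonal_mat D" using D3 unfolding D_def diagonal_mat_def by auto
  ultimately show ?case using orthonormal_mat_mult[OF W(1) V] D by blast
qed

section \<open>A variational bound for the second eigenvalue\<close>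

lemma proots_prod_linear_factors: "proots (\<Prod>a\<leftarrow>xs. [:- a, 1:]) = mset (xs :: real list)"
proof (induct xs)
  case (Cons a xs)
  have nz: "(\<Prod>a\<leftarrow>xs. [:- a, 1:]) \<noteq> (0 :: real poly)" by (auto simp: prod_list_zero_iff)
  have "proots (\<Prod>b\<leftarrow>a # xs. [:- b, 1:]) = proots [:- a, 1:] + proots (\<Prod>b\<leftarrow>xs. [:- b, 1:])"
    unfolding list.map prod_list.Cons by (subst proots_mult) (use nz in auto)
  then show ?case using Cons proots_linear_factor[of "-a"] by simp
qed simp

lemma spectral_decomposition_proots:
  assumes "spectral_decomposition n L U D"
  shows "proots (char_poly L) = mset (diag_mat D)"
proof -
  have U: "U \<in> carrier_mat n n" and D: "D \<in> carrier_mat n n" and dD: "diagonal_mat D"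
    and L: "L = U * D * transpose_mat U"
    using assms unfolding spectral_decomposition_def orthonormal_mat_def by auto
  have "similar_mat L D" unfolding similar_mat_def similar_mat_wit_def Let_def
    using assms U D L orthonormal_mat_right_inverse
    unfolding spectral_decomposition_def orthonormal_mat_def
    by (intro exI[of _ U] exI[of _ "transpose_mat U"]) auto
  then have "char_poly L = char_poly D" by (rule char_poly_similar)
  also have "\<dots> = (\<Prod>a\<leftarrow>diag_mat D. [:- a, 1:])"
    by (rule char_poly_upper_triangular[OF D]) (use dD D in \<open>auto simp: diagonal_mat_def\<close>)
  finally show ?thesis using proots_prod_linear_factors by simp
qed

lemma diagonal_mat_mult_vec:
  assumes D: "D \<in> carrier_mat n n" and dD: "diagonal_mat D"
    and y: "y \<in> carrier_vec n" and i: "i < n"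
  shows "(D *\<^sub>v y) $ i = D $$ (i, i) * y $ i"
proof -
  have "(D *\<^sub>v y) $ i = (\<Sum>j\<in>{0..<n}. D $$ (i, j) * y $ j)"
    using D y i by (auto simp: scalar_prod_def)
  also have "\<dots> = (\<Sum>j\<in>{0..<n}. if j = i then D $$ (i, i) * y $ i else 0)"
    using dD D i unfolding diagonal_mat_def by (intro sum.cong) auto
  finally show ?thesis using i by simp
qed

lemma scalar_prod_self_sum_squares: "(x :: real vec) \<in> carrier_vec n \<Longrightarrow> x \<bullet> x = (\<Sum>i<n. (x $ i)\<^sup>2)"
  by (simp add: scalar_prod_def power2_eq_square lessThan_atLeast0)

lemma spectral_decomposition_quadratic_form:
  assumes "spectral_decomposition n L U D" and x: "x \<in> carrier_vec n"
  shows "x \<bullet> (L *\<^sub>v x) = (\<Sum>i<n. D $$ (i, i) * ((transpose_mat U *\<^sub>v x) $ i)\<^sup>2)"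
proof -
  have U: "U \<in> carrier_mat n n" and D: "D \<in> carrier_mat n n" and dD: "diagonal_mat D"
    and L: "L = U * D * transpose_mat U"
    using assms unfolding spectral_decomposition_def orthonormal_mat_def by auto
  define y where "y = transpose_mat U *\<^sub>v x"
  have y: "y \<in> carrier_vec n" unfolding y_def using U x by auto
  have "L *\<^sub>v x = U *\<^sub>v (D *\<^sub>v y)" unfolding L y_def using U D x
    by (simp add: assoc_mult_mat_vec[of _ n n _ n])
  then have "x \<bullet> (L *\<^sub>v x) = y \<bullet> (D *\<^sub>v y)"
    using transpose_vec_mult_scalar[OF U _ x, of "D *\<^sub>v y"] D y unfolding y_def by auto
  also have "\<dots> = (\<Sum>i<n. D $$ (i, i) * (y $ i)\<^sup>2)"
    unfolding scalar_prod_def using D y diagonal_mat_mult_vec[OF D dD y]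
    by (auto simp: power2_eq_square lessThan_atLeast0 intro!: sum.cong)
  finally show ?thesis unfolding y_def .
qed

lemma orthonormal_mat_sum_squares:
  assumes "orthonormal_mat n U" "x \<in> carrier_vec n"
  shows "x \<bullet> x = (\<Sum>i<n. ((transpose_mat U *\<^sub>v x) $ i)\<^sup>2)"
proof -
  have "transpose_mat U *\<^sub>v x \<in> carrier_vec n" using assms unfolding orthonormal_mat_def by auto
  then show ?thesis
    using orthonormal_mat_scalar_prod[OF assms] scalar_prod_self_sum_squares by metis
qed

lemma spectral_decomposition_psd_diag_nonneg:
  assumes sd: "spectral_decomposition n L U D"
    and psd: "\<And>x. x \<in> carrier_vec n \<Longrightarrow> x \<bullet> (L *\<^sub>v x) \<ge> 0" and i: "i < n"
  shows "D $$ (i, i) \<ge> 0"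
proof -
  have U: "orthonormal_mat n U" and Uc: "U \<in> carrier_mat n n"
    using sd unfolding spectral_decomposition_def orthonormal_mat_def by auto
  define x where "x = U *\<^sub>v unit_vec n i"
  have x: "x \<in> carrier_vec n" unfolding x_def using Uc by auto
  have "transpose_mat U *\<^sub>v x = unit_vec n i"
    unfolding x_def using orthonormal_mat_transpose_mult_vec(2)[OF U] by simp
  then have "x \<bullet> (L *\<^sub>v x) = (\<Sum>k<n. D $$ (k, k) * (unit_vec n i $ k)\<^sup>2)"
    using spectral_decomposition_quadratic_form[OF sd x] by simp
  also have "\<dots> = (\<Sum>k<n. if k = i then D $$ (i, i) else 0)"
    by (intro sum.cong) (auto simp: unit_vec_def)
  finally show ?thesis using psd[OF x] i by simp
qed

lemma spectral_decomposition_Rayleigh_bound: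
  assumes sd: "spectral_decomposition n L U D" and w: "w \<in> carrier_vec n"
    and w0: "(transpose_mat U *\<^sub>v w) $ i0 = 0" and c: "\<And>i. i < n \<Longrightarrow> i \<noteq> i0 \<Longrightarrow> c \<le> D $$ (i, i)"
  shows "c * (w \<bullet> w) \<le> w \<bullet> (L *\<^sub>v w)"
proof -
  let ?y = "transpose_mat U *\<^sub>v w"
  have "orthonormal_mat n U" using sd unfolding spectral_decomposition_def by simp
  then have "c * (w \<bullet> w) = (\<Sum>i<n. c * (?y $ i)\<^sup>2)"
    using orthonormal_mat_sum_squares[OF _ w] by (simp add: sum_distrib_left)
  also have "\<dots> \<le> (\<Sum>i<n. D $$ (i, i) * (?y $ i)\<^sup>2)"
    by (rule sum_mono) (use w0 c in \<open>force intro: mult_right_mono\<close>)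
  also have "\<dots> = w \<bullet> (L *\<^sub>v w)" using spectral_decomposition_quadratic_form[OF sd w] by simp
  finally show ?thesis .
qed

lemma sort_nth_1_le:
  fixes xs :: "'a :: linorder list"
  assumes i0: "i0 < length xs" and min: "\<forall>k<length xs. xs ! i0 \<le> xs ! k"
    and j: "j < length xs" "j \<noteq> i0"
  shows "sort xs ! 1 \<le> xs ! j"
proof -
  define ys where "ys = take i0 xs @ drop (Suc i0) xs"
  have "mset xs = add_mset (xs ! i0) (mset ys)"
    using id_take_nth_drop[OF i0] unfolding ys_def
    by (metis mset.simps(2) mset_append union_mset_add_mset_right)
  then have sort_xs: "sort xs = insort (xs ! i0) (sort ys)"
    by (metis sorted_list_of_multiset_insert sorted_list_of_multiset_mset)
  have jy: "xs ! j \<in> set ys"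
  proof (cases "j < i0")
    case True
    then show ?thesis unfolding ys_def using j i0
      by (auto simp: in_set_conv_nth intro!: exI[of _ j])
  next
    case False
    then show ?thesis unfolding ys_def using j i0
      by (auto simp: in_set_conv_nth min_def intro!: exI[of _ "j - Suc i0"])
  qed
  have "set ys \<subseteq> set xs" unfolding ys_def using set_drop_subset set_take_subset by fastforce
  moreover have "\<forall>x\<in>set xs. xs ! i0 \<le> x" using min by (auto simp: in_set_conv_nth)
  ultimately have all: "\<forall>x\<in>set (sort ys). xs ! i0 \<le> x" by auto
  obtain a as where aL: "sort ys = a # as"
    using jy by (cases "sort ys") (metis empty_iff list.set(1) set_sort, auto)
  have "sort xs ! 1 = a" unfolding sort_xs using all aL by simp
  moreover have "sorted (a # as)" using aL by (metis sorted_sort)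
  ultimately show ?thesis using jy aL by (metis set_ConsD set_sort order_refl sorted_simps(2))
qed

lemma sort_second_le_all_but_one:
  fixes xs :: "'a :: linorder list"
  assumes "xs \<noteq> []"
  shows "\<exists>i0<length xs. \<forall>j<length xs. j \<noteq> i0 \<longrightarrow> sort xs ! 1 \<le> xs ! j"
proof -
  have "finite ((!) xs ` {0..<length xs})" "(!) xs ` {0..<length xs} \<noteq> {}" using assms by auto
  then obtain i0 where i0: "i0 < length xs" and min: "xs ! i0 = Min ((!) xs ` {0..<length xs})"
    by (metis (no_types, lifting) Min_in imageE atLeastLessThan_iff)
  have "\<forall>k<length xs. xs ! i0 \<le> xs ! k"
    using min \<open>finite _\<close> by (metis Min_le atLeastLessThan_iff image_eqI zero_le)
  then show ?thesis using sort_nth_1_le i0 by blast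
qed

lemma spectral_decomposition_sorted_eigenvalues:
  fixes L :: "real mat"
  assumes "spectral_decomposition n L U D"
  shows "sorted_list_of_multiset (proots (char_poly L)) = sort (diag_mat D)"
  using spectral_decomposition_proots[OF assms] by (simp add: sorted_list_of_multiset_mset)

lemma psd_sorted_eigenvalue_nonneg:
  fixes L :: "real mat"
  assumes L: "L \<in> carrier_mat n n" and sym: "transpose_mat L = L"
    and psd: "\<And>x. x \<in> carrier_vec n \<Longrightarrow> x \<bullet> (L *\<^sub>v x) \<ge> 0" and k: "k < n"
  shows "sorted_list_of_multiset (proots (char_poly L)) ! k \<ge> 0"
proof -
  obtain U D where sd: "spectral_decomposition n L U D"
    using real_symmetric_spectral_decomposition[OF L sym] by blast
  then have D: "D \<in> carrier_mat n n" unfolding spectral_decomposition_def by simp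
  then have "length (diag_mat D) = n" by (simp add: diag_mat_def)
  then have "sort (diag_mat D) ! k \<in> set (diag_mat D)" using k
    by (metis length_sort nth_mem set_sort)
  then show ?thesis
    unfolding spectral_decomposition_sorted_eigenvalues[OF sd]
    using spectral_decomposition_psd_diag_nonneg[OF sd psd] D
    by (auto simp: diag_mat_def)
qed

lemma quadratic_form_shift_by_kernel_vector:
  fixes L :: "real mat" and y z :: real
  assumes L: "L \<in> carrier_mat n n" and sym: "transpose_mat L = L"
    and u: "u \<in> carrier_vec n" "L *\<^sub>v u = 0\<^sub>v n" and x: "x \<in> carrier_vec n" "x \<bullet> u = 0"
  defines "w \<equiv> z \<cdot>\<^sub>v x - y \<cdot>\<^sub>v u"
  shows "w \<bullet> (L *\<^sub>v w) = z\<^sup>2 * (x \<bullet> (L *\<^sub>v x))" and "w \<bullet> w = z\<^sup>2 * (x \<bullet> x) + y\<^sup>2 * (u \<bullet> u)"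
proof -
  have Lw: "L *\<^sub>v w = z \<cdot>\<^sub>v (L *\<^sub>v x)" unfolding w_def using L x u
    by (simp add: mult_minus_distrib_mat_vec mult_mat_vec, intro eq_vecI, insert L x, auto)
  have "u \<bullet> (L *\<^sub>v x) = (transpose_mat L *\<^sub>v u) \<bullet> x"
    using transpose_vec_mult_scalar[OF L x(1) u(1)] by simp
  then have uLx: "u \<bullet> (L *\<^sub>v x) = 0" using sym u x by simp
  have Lx: "L *\<^sub>v x \<in> carrier_vec n" using L x by auto
  show "w \<bullet> (L *\<^sub>v w) = z\<^sup>2 * (x \<bullet> (L *\<^sub>v x))"
    using x u Lx uLx
      by (subst Lw, unfold w_def, simp add: minus_scalar_prod_distrib power2_eq_square)
  show "w \<bullet> w = z\<^sup>2 * (x \<bullet> x) + y\<^sup>2 * (u \<bullet> u)" unfolding w_def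
    using x u comm_scalar_prod[OF x(1) u(1)]
    by (simp add: minus_scalar_prod_distrib scalar_prod_minus_distrib power2_eq_square
        algebra_simps)
qed

lemma hyperplane_bound_extends_to_kernel_complement:
  fixes L :: "real mat"
  assumes L: "L \<in> carrier_mat n n" and sym: "transpose_mat L = L"
    and psd: "\<And>x. x \<in> carrier_vec n \<Longrightarrow> x \<bullet> (L *\<^sub>v x) \<ge> 0"
    and u: "u \<in> carrier_vec n" "u \<noteq> 0\<^sub>v n" "L *\<^sub>v u = 0\<^sub>v n"
    and a: "a \<in> carrier_vec n" and lam: "lam \<ge> 0"
    and bound: "\<And>w. w \<in> carrier_vec n \<Longrightarrow> a \<bullet> w = 0 \<Longrightarrow> lam * (w \<bullet> w) \<le> w \<bullet> (L *\<^sub>v w)"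
    and x: "x \<in> carrier_vec n" "x \<bullet> u = 0"
  shows "lam * (x \<bullet> x) \<le> x \<bullet> (L *\<^sub>v x)"
proof -
  have uu: "u \<bullet> u > 0" using scalar_prod_self_pos_real[OF u(1,2)] .
  define z where "z = a \<bullet> u"
  define y where "y = a \<bullet> x"
  show ?thesis
  proof (cases "z = 0")
    case True
    \<comment> \<open>then u itself lies in the hyperplane, and u is a null vector\<close>
    have "lam * (u \<bullet> u) \<le> 0" using bound[OF u(1)] True u(1,3) unfolding z_def by simp
    then have "lam = 0" using lam uu by (simp add: mult_le_0_iff)
    then show ?thesis using psd[OF x(1)] by simp
  next
    case False
    define w where "w = z \<cdot>\<^sub>v x - y \<cdot>\<^sub>v u"
    have w: "w \<in> carrier_vec n" unfolding w_def using x u by auto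
    have "a \<bullet> w = 0"
      unfolding w_def z_def y_def using a x u by (simp add: scalar_prod_minus_distrib)
    then have "lam * (w \<bullet> w) \<le> z\<^sup>2 * (x \<bullet> (L *\<^sub>v x))"
      using bound[OF w] quadratic_form_shift_by_kernel_vector(1)[OF L sym u(1,3) x] unfolding w_def
        by simp
    moreover have "lam * (z\<^sup>2 * (x \<bullet> x)) \<le> lam * (w \<bullet> w)"
      unfolding w_def quadratic_form_shift_by_kernel_vector(2)[OF L sym u(1,3) x] using lam uu
      by (intro mult_left_mono) auto
    ultimately have "z\<^sup>2 * (lam * (x \<bullet> x)) \<le> z\<^sup>2 * (x \<bullet> (L *\<^sub>v x))" by (simp add: algebra_simps)
    then show ?thesis using False by simp
  qed
qed

theorem second_eigenvalue_Rayleigh_bound: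
  fixes L :: "real mat"
  assumes L: "L \<in> carrier_mat n n" and sym: "transpose_mat L = L"
    and psd: "\<And>x. x \<in> carrier_vec n \<Longrightarrow> x \<bullet> (L *\<^sub>v x) \<ge> 0"
    and u: "u \<in> carrier_vec n" "u \<noteq> 0\<^sub>v n" "L *\<^sub>v u = 0\<^sub>v n" and n: "n \<ge> 2"
    and x: "x \<in> carrier_vec n" "x \<bullet> u = 0"
  shows "sorted_list_of_multiset (proots (char_poly L)) ! 1 * (x \<bullet> x) \<le> x \<bullet> (L *\<^sub>v x)"
proof -
  define lam where "lam = sorted_list_of_multiset (proots (char_poly L)) ! 1"
  obtain U D where sd: "spectral_decomposition n L U D"
    using real_symmetric_spectral_decomposition[OF L sym] by blast
  have U: "U \<in> carrier_mat n n" and D: "D \<in> carrier_mat n n"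
    using sd unfolding spectral_decomposition_def orthonormal_mat_def by auto
  define mu where "mu = diag_mat D"
  have lmu: "length mu = n" and mui: "\<And>i. i < n \<Longrightarrow> mu ! i = D $$ (i, i)"
    unfolding mu_def diag_mat_def using D by auto
  have "mu \<noteq> []" using lmu n by auto
  then obtain i0 where i0: "i0 < n" and lam_le: "\<forall>j<n. j \<noteq> i0 \<longrightarrow> lam \<le> D $$ (j, j)"
    using sort_second_le_all_but_one[of mu] lmu mui
    unfolding lam_def spectral_decomposition_sorted_eigenvalues[OF sd] mu_def[symmetric] by auto
  have "lam * (w \<bullet> w) \<le> w \<bullet> (L *\<^sub>v w)" if "w \<in> carrier_vec n" "col U i0 \<bullet> w = 0" for w
  proof (rule spectral_decomposition_Rayleigh_bound[OF sd that(1)])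
    show "(transpose_mat U *\<^sub>v w) $ i0 = 0" using that U i0 by simp
  qed (use lam_le in auto)
  moreover have "lam \<ge> 0" unfolding lam_def using psd_sorted_eigenvalue_nonneg[OF L sym psd] n
    by simp
  moreover have "col U i0 \<in> carrier_vec n" using U unfolding carrier_vec_def by simp
  ultimately show ?thesis
    using hyperplane_bound_extends_to_kernel_complement[OF L sym psd u] x unfolding lam_def by blast
qed

section \<open>Balanced separations in tree decompositions\<close>

lemma rtranclp_distinct_path:
  assumes "R\<^sup>*\<^sup>* a b"
  shows "\<exists>ps. ps \<noteq> [] \<and> hd ps = a \<and> last ps = b \<and> distinct ps \<and>
     (\<forall>i. Suc i < length ps \<longrightarrow> R (ps ! i) (ps ! Suc i)) \<and> set ps \<subseteq> {x. R\<^sup>*\<^sup>* a x}"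
  using assms
proof (induct rule: rtranclp_induct)
  case base
  show ?case by (intro exI[of _ "[a]"]) auto
next
  case (step b c)
  then obtain ps where ps: "ps \<noteq> []" "hd ps = a" "last ps = b" "distinct ps"
    "\<forall>i. Suc i < length ps \<longrightarrow> R (ps ! i) (ps ! Suc i)" "set ps \<subseteq> {x. R\<^sup>*\<^sup>* a x}" by blast
  show ?case
  proof (cases "c \<in> set ps")
    case True
    then obtain xs ys where xy: "ps = xs @ c # ys" by (metis split_list)
    let ?qs = "xs @ [c]"
    have "?qs ! i = ps ! i" if "i < length ?qs" for i
      using that unfolding xy by (auto simp: nth_append)
    then have "\<forall>i. Suc i < length ?qs \<longrightarrow> R (?qs ! i) (?qs ! Suc i)"
      using ps(5) unfolding xy by auto
    moreover have "hd ?qs = a" using ps(2) unfolding xy by (cases xs) auto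
    ultimately show ?thesis using ps(4,6) unfolding xy by (intro exI[of _ ?qs]) auto
  next
    case False
    let ?qs = "ps @ [c]"
    have "R (?qs ! i) (?qs ! Suc i)" if i: "Suc i < length ?qs" for i
    proof (cases "Suc i < length ps")
      case True
      then show ?thesis using ps(5) by (auto simp: nth_append)
    next
      case False
      then have "Suc i = length ps" using i by auto
      moreover have "ps ! i = last ps" using ps(1) \<open>Suc i = length ps\<close>
        by (simp add: last_conv_nth del: One_nat_def) (metis diff_Suc_1)
      ultimately show ?thesis using ps(3) step(2) by (auto simp: nth_append)
    qed
    then show ?thesis using ps step(1,2) False by (intro exI[of _ ?qs]) auto
  qed
qed

lemma funpow_periodic_point:
  assumes A: "finite A" "a \<in> A" and f: "\<And>x. x \<in> A \<Longrightarrow> f x \<in> A"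
  shows "\<exists>x\<in>A. \<exists>k>0. (f ^^ k) x = x \<and> inj_on (\<lambda>i. (f ^^ i) x) {..<k}"
proof -
  have orbit: "(f ^^ i) a \<in> A" for i by (induct i) (use A f in auto)
  have "\<not> inj_on (\<lambda>i. (f ^^ i) a) {0..card A}"
  proof
    assume "inj_on (\<lambda>i. (f ^^ i) a) {0..card A}"
    then have "card ((\<lambda>i. (f ^^ i) a) ` {0..card A}) = Suc (card A)" by (simp add: card_image)
    moreover have "card ((\<lambda>i. (f ^^ i) a) ` {0..card A}) \<le> card A"
      using orbit A by (intro card_mono) auto
    ultimately show False by simp
  qed
  then obtain i j where ij: "i < j" "(f ^^ i) a = (f ^^ j) a"
    unfolding inj_on_def by (metis linorder_neqE_nat)
  define x where "x = (f ^^ i) a"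
  have "(f ^^ (j - i)) x = x"
    using ij unfolding x_def by (metis funpow_add comp_apply le_add_diff_inverse2 less_imp_le)
  then have ex: "\<exists>k. 0 < k \<and> (f ^^ k) x = x" using ij by (intro exI[of _ "j - i"]) auto
  define k where "k = (LEAST k. 0 < k \<and> (f ^^ k) x = x)"
  have k: "0 < k" "(f ^^ k) x = x" using LeastI_ex[OF ex] unfolding k_def by auto
  have ne: "(f ^^ p) x \<noteq> (f ^^ q) x" if "p < q" "q < k" for p q
  proof
    assume eq: "(f ^^ p) x = (f ^^ q) x"
    \<comment> \<open>then x would return already after k - (q - p) steps\<close>
    have "(f ^^ (k - q + p)) x = (f ^^ (k - q)) ((f ^^ q) x)" by (simp add: funpow_add eq)
    also have "\<dots> = x" using that k(2)
      by (metis funpow_add comp_apply le_add_diff_inverse2 less_imp_le)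
    finally have "0 < k - q + p \<and> (f ^^ (k - q + p)) x = x" using that by simp
    moreover have "k - q + p < k" using that by simp
    ultimately show False
      using not_less_Least[of "k - q + p" "\<lambda>k. 0 < k \<and> (f ^^ k) x = x"] unfolding k_def by blast
  qed
  have "inj_on (\<lambda>i. (f ^^ i) x) {..<k}"
    by (rule inj_onI) (metis lessThan_iff linorder_neqE_nat ne)
  then show ?thesis using k orbit unfolding x_def by blast
qed

lemma tree_successor_backtracks:
  assumes tree: "is_tree m F" and f: "\<And>t. t < m \<Longrightarrow> F t (f t)"
  shows "\<exists>t<m. f (f t) = t"
proof (rule ccontr)
  assume no_backtrack: "\<not> ?thesis"
  have F: "\<And>a b. F a b \<Longrightarrow> a < m \<and> b < m" "\<And>a. \<not> F a a" and "m \<ge> 1"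
    using tree unfolding is_tree_def simple_graph_def by auto
  then obtain x k where x: "x < m" and k: "0 < k" "(f ^^ k) x = x"
    and inj: "inj_on (\<lambda>i. (f ^^ i) x) {..<k}"
    using funpow_periodic_point[of "{..<m}" 0 f] f by fastforce
  have step: "F ((f ^^ i) x) ((f ^^ Suc i) x)" for i
  proof -
    have "(f ^^ i) x < m" by (induct i) (use x f F in auto)
    then show ?thesis using f by simp
  qed
  define cs where "cs = map (\<lambda>i. (f ^^ i) x) [0..<k]"
  have "k \<noteq> 1" using step[of 0] k F(2) by auto
  moreover have "k \<noteq> 2" using no_backtrack x k by (auto simp: numeral_2_eq_2)
  ultimately have "length cs \<ge> 3" using k unfolding cs_def by auto
  moreover have "distinct cs" unfolding cs_def using inj by (simp add: distinct_map atLeast_upt)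
  moreover have "F (last cs) (hd cs)"
    using step[of "k - 1"] k unfolding cs_def by (simp add: last_map hd_map)
  ultimately have "is_cycle F cs" using step unfolding is_cycle_def cs_def by auto
  then show False using tree unfolding is_tree_def by blast
qed

definition class_size :: "nat \<Rightarrow> nat set \<Rightarrow> (nat \<Rightarrow> nat) \<Rightarrow> nat \<Rightarrow> nat" where
  "class_size n S cl i = card {v. v < n \<and> v \<notin> S \<and> cl v = i}"

definition balanced_separation :: "nat \<Rightarrow> (nat \<Rightarrow> nat \<Rightarrow> bool) \<Rightarrow> nat set \<Rightarrow> (nat \<Rightarrow> nat) \<Rightarrow> bool" where
  "balanced_separation n E S cl \<longleftrightarrow> (\<forall>v. cl v < 3) \<and>
     (\<forall>u v. E u v \<longrightarrow> u \<notin> S \<longrightarrow> v \<notin> S \<longrightarrow> cl u = cl v) \<and>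
     (\<forall>i<3. 2 * class_size n S cl i \<le> n - card S)"

lemma balanced_three_colouring:
  fixes g :: "'a \<Rightarrow> 'b"
  assumes X: "finite X" and small: "\<And>j. 2 * card {x\<in>X. g x = j} \<le> card X"
  shows "\<exists>c. (\<forall>j. c j < (3 :: nat)) \<and> (\<forall>i<3. 2 * card {x\<in>X. c (g x) = i} \<le> card X)"
proof -
  define f where "f J = card {x\<in>X. g x \<in> J}" for J
  define Cand where "Cand = {J. J \<subseteq> g ` X \<and> 2 * f J \<le> card X}"
  have fin: "finite Cand" unfolding Cand_def
    by (rule finite_subset[of _ "Pow (g ` X)"]) (use X in auto)
  moreover have "{} \<in> Cand" unfolding Cand_def f_def by simp
  ultimately have "Max (f ` Cand) \<in> f ` Cand" by (intro Max_in) auto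
  \<comment> \<open>a union of parts that is maximal among those covering at most half of X\<close>
  then obtain J where J: "J \<in> Cand" "f J = Max (f ` Cand)" by auto
  have Jmax: "f J' \<le> f J" if "J' \<in> Cand" for J' using J(2) fin that by simp
  show ?thesis
  proof (cases "g ` X \<subseteq> J")
    case True
    then have "{x\<in>X. g x \<in> J} = X" by auto
    then have "2 * card X \<le> card X" using J unfolding Cand_def f_def by simp
    then have "X = {}" using X by simp
    then show ?thesis by (intro exI[of _ "\<lambda>_. 0"]) auto
  next
    case False
    then obtain x0 where x0: "x0 \<in> X" "g x0 \<notin> J" by auto
    define J' where "J' = insert (g x0) J"
    have "{x\<in>X. g x \<in> J'} = {x\<in>X. g x \<in> J} \<union> {x\<in>X. g x = g x0}" unfolding J'_def by auto
    then have fJ': "f J' = f J + card {x\<in>X. g x = g x0}"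
      unfolding f_def by (simp only:) (rule card_Un_disjoint, use X x0 in auto)
    moreover have "card {x\<in>X. g x = g x0} > 0" using x0 X by (auto simp: card_gt_0_iff)
    ultimately have "J' \<notin> Cand" using Jmax[of J'] by linarith
    then have big: "2 * f J' > card X" using J x0 unfolding Cand_def J'_def by auto
    define c where "c j = (if j \<in> J then 0 else if j = g x0 then 1 else (2 :: nat))" for j
    have "{x\<in>X. c (g x) = 0} = {x\<in>X. g x \<in> J}" "{x\<in>X. c (g x) = 1} = {x\<in>X. g x = g x0}"
      "{x\<in>X. c (g x) = 2} = X - {x\<in>X. g x \<in> J'}"
      using x0 unfolding c_def J'_def by auto
    moreover have "card (X - {x\<in>X. g x \<in> J'}) = card X - f J'"
      unfolding f_def using X by (subst card_Diff_subset) auto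
    moreover have "f J' \<le> card X" unfolding f_def using X by (intro card_mono) auto
    ultimately have class_bound: "2 * card {x\<in>X. c (g x) = i} \<le> card X"
      if "i = 0 \<or> i = 1 \<or> i = 2" for i
      using that J(1) small[of "g x0"] big unfolding Cand_def f_def by auto
    have "2 * card {x\<in>X. c (g x) = i} \<le> card X" if "i < 3" for i
      using class_bound that by (auto simp: numeral_3_eq_3 less_Suc_eq)
    moreover have "c j < 3" for j unfolding c_def by auto
    ultimately show ?thesis by blast
  qed
qed

lemma two_sided_balanced_separation:
  assumes E: "\<And>u v. E u v \<Longrightarrow> u < n \<and> v < n"
    and part: "{v. v < n \<and> v \<notin> S} = P \<union> Q" "P \<inter> Q = {}"
    and no_edge: "\<And>u v. u \<in> P \<Longrightarrow> v \<in> Q \<Longrightarrow> \<not> E u v \<and> \<not> E v u"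
    and card_eq: "card P = card Q" and S: "S \<subseteq> {0..<n}"
  shows "balanced_separation n E S (\<lambda>v. if v \<in> P then 0 else 1)"
proof -
  have "P \<union> Q \<subseteq> {0..<n}" unfolding part(1)[symmetric] by auto
  then have fin: "finite P" "finite Q" by (meson finite_atLeastLessThan finite_subset le_sup_iff)+
  have "n - card S = card ({0..<n} - S)" using S by (simp add: card_Diff_subset finite_subset)
  also have "{0..<n} - S = P \<union> Q" unfolding part(1)[symmetric] by auto
  finally have nS: "n - card S = card P + card Q" using fin part(2) by (simp add: card_Un_disjoint)
  have classes: "{v. v < n \<and> v \<notin> S \<and> (if v \<in> P then 0 else 1) = i} =
      (if i = 0 then P else if i = 1 then Q else {})" for i :: nat
  proof -
    have "{v. v < n \<and> v \<notin> S \<and> (if v \<in> P then 0 else 1) = i} =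
        {v \<in> P \<union> Q. (if v \<in> P then 0 else 1) = i}"
      using part(1) by blast
    also have "\<dots> = (if i = 0 then P else if i = 1 then Q else {})" using part(2) by auto
    finally show ?thesis .
  qed
  show ?thesis unfolding balanced_separation_def
  proof (intro conjI allI impI)
    fix u v assume "E u v" "u \<notin> S" "v \<notin> S"
    then have "u \<in> P \<union> Q" "v \<in> P \<union> Q" "E u v" using E part(1) by blast+
    then show "(if u \<in> P then 0 else 1) = (if v \<in> P then 0 else (1 :: nat))"
      using no_edge[of u v] no_edge[of v u] by auto
  next
    fix i :: nat
    show "2 * class_size n S (\<lambda>v. if v \<in> P then 0 else 1) i \<le> n - card S"
      unfolding class_size_def classes nS using card_eq by simp
  qed simp
qed

locale tree_decomp =
  fixes n :: nat and E :: "nat \<Rightarrow> nat \<Rightarrow> bool" and m :: nat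
    and F :: "nat \<Rightarrow> nat \<Rightarrow> bool" and B :: "nat \<Rightarrow> nat set"
  assumes is_decomposition: "tree_decomposition n E m F B"
begin

lemma bag_subset: "t < m \<Longrightarrow> B t \<subseteq> {0..<n}"
  and vertex_in_bag: "v < n \<Longrightarrow> \<exists>t<m. v \<in> B t"
  and edge_in_bag: "E u v \<Longrightarrow> \<exists>t<m. u \<in> B t \<and> v \<in> B t"
  and bags_connected: "v < n \<Longrightarrow> connected_on F {t. t < m \<and> v \<in> B t}"
  and tree: "is_tree m F"
  using is_decomposition unfolding tree_decomposition_def by auto

lemma tree_edge_sym: "F a b \<Longrightarrow> F b a"
  and tree_edge_irrefl: "\<not> F a a"
  and tree_edge_less: "F a b \<Longrightarrow> a < m \<and> b < m"
  using tree unfolding is_tree_def simple_graph_def by auto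

lemma edge_less: "E u v \<Longrightarrow> u < n \<and> v < n"
  using edge_in_bag bag_subset by fastforce

definition avoiding :: "nat \<Rightarrow> nat \<Rightarrow> nat \<Rightarrow> bool" where
  "avoiding t a b \<longleftrightarrow> F a b \<and> a \<noteq> t \<and> b \<noteq> t"

text \<open>The component of the forest obtained by deleting node t that contains its neighbour t',
  and the vertices outside B t that live in bags of that component.\<close>

definition subtree :: "nat \<Rightarrow> nat \<Rightarrow> nat set" where
  "subtree t t' = {r. (avoiding t)\<^sup>*\<^sup>* t' r}"

definition branch :: "nat \<Rightarrow> nat \<Rightarrow> nat set" where
  "branch t t' = {v. v < n \<and> v \<notin> B t \<and> (\<exists>r\<in>subtree t t'. r < m \<and> v \<in> B r)}"

lemma avoiding_rtranclp_sym: "(avoiding t)\<^sup>*\<^sup>* a b \<Longrightarrow> (avoiding t)\<^sup>*\<^sup>* b a"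
proof (induct rule: rtranclp_induct)
  case (step b c)
  have "avoiding t c b" using step(2) tree_edge_sym unfolding avoiding_def by auto
  then show ?case using step(3) by (rule converse_rtranclp_into_rtranclp)
qed simp

lemma avoiding_rtranclp_ne: "(avoiding t)\<^sup>*\<^sup>* a b \<Longrightarrow> a \<noteq> t \<Longrightarrow> b \<noteq> t"
  by (induct rule: rtranclp_induct) (auto simp: avoiding_def)

lemma subtree_not_root: "F t t' \<Longrightarrow> r \<in> subtree t t' \<Longrightarrow> r \<noteq> t"
  using avoiding_rtranclp_ne tree_edge_irrefl unfolding subtree_def by blast

lemma neighbours_not_connected_avoiding:
  assumes t1: "F t t1" and t2: "F t t2" and ne: "t1 \<noteq> t2"
  shows "\<not> (avoiding t)\<^sup>*\<^sup>* t1 t2"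
proof
  assume "(avoiding t)\<^sup>*\<^sup>* t1 t2"
  then obtain ps where ps: "ps \<noteq> []" "hd ps = t1" "last ps = t2" "distinct ps"
    "\<forall>i. Suc i < length ps \<longrightarrow> avoiding t (ps ! i) (ps ! Suc i)" "set ps \<subseteq> {x. (avoiding t)\<^sup>*\<^sup>* t1 x}"
    using rtranclp_distinct_path by metis
  have "t \<notin> set ps" using ps(6) subtree_not_root[OF t1] unfolding subtree_def by auto
  moreover have "length ps \<ge> 2" using ps(1-3) ne
    by (cases ps) (auto split: if_splits simp: Suc_le_eq)
  \<comment> \<open>closing the path through t gives a cycle\<close>
  moreover have "F ((t # ps) ! i) ((t # ps) ! Suc i)" if "Suc i < length (t # ps)" for i
    using that t1 ps(1,2,5) unfolding avoiding_def by (cases i; cases ps) auto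
  ultimately have "is_cycle F (t # ps)"
    unfolding is_cycle_def using ps(1,3,4) t2 tree_edge_sym by auto
  then show False using tree unfolding is_tree_def by blast
qed

lemma subtree_unique:
  assumes "F t t1" "F t t2" "r \<in> subtree t t1" "r \<in> subtree t t2"
  shows "t1 = t2"
  using assms neighbours_not_connected_avoiding avoiding_rtranclp_sym rtranclp_trans
  unfolding subtree_def by (metis mem_Collect_eq)

lemma path_from_node_enters_subtree:
  assumes "R\<^sup>*\<^sup>* t r" and R: "\<And>x y. R x y \<Longrightarrow> F x y"
  shows "r = t \<or> (\<exists>t'. R t t' \<and> r \<in> subtree t t')"
  using assms(1)
proof (induct rule: rtranclp_induct)
  case (step x y)
  show ?case
  proof (cases "y = t")
    case False
    from step(3) show ?thesis
    proof
      assume "x = t"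
      then show ?thesis using step(2) unfolding subtree_def by auto
    next
      assume "\<exists>t'. R t t' \<and> x \<in> subtree t t'"
      then obtain t' where t': "R t t'" "x \<in> subtree t t'" by auto
      then have "x \<noteq> t" using subtree_not_root R by blast
      then have "avoiding t x y" using step(2) R False unfolding avoiding_def by auto
      then show ?thesis using t' unfolding subtree_def
        by (meson mem_Collect_eq rtranclp.rtrancl_into_rtrancl)
    qed
  qed simp
qed simp

lemma subtree_exists:
  assumes "t < m" "r < m" "r \<noteq> t"
  shows "\<exists>t'. F t t' \<and> r \<in> subtree t t'"
  using path_from_node_enters_subtree[of "\<lambda>x y. F x y \<and> x \<in> {0..<m} \<and> y \<in> {0..<m}" t r] assms tree
  unfolding is_tree_def connected_on_def by auto

lemma subtrees_of_edge_disjoint: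
  assumes "F t t'"
  shows "subtree t t' \<inter> subtree t' t = {}"
proof (intro equalityI subsetI)
  fix r assume r: "r \<in> subtree t t' \<inter> subtree t' t"
  then have "r \<noteq> t" using subtree_not_root[OF assms] by blast
  then obtain t'' where "avoiding t' t t''" "r \<in> subtree t t''"
    using path_from_node_enters_subtree[of "avoiding t'" t r] r unfolding subtree_def avoiding_def
      by auto
  then show "r \<in> {}" using subtree_unique[OF assms] r unfolding avoiding_def by auto
qed simp

lemma subtrees_of_edge_cover:
  assumes tt: "F t t'" and r: "r < m"
  shows "r \<in> subtree t' t \<or> r \<in> subtree t t'"
proof (cases "r = t")
  case False
  obtain t'' where t'': "F t t''" "r \<in> subtree t t''"
    using subtree_exists[OF _ r False] tt tree_edge_less by blast
  show ?thesis
  proof (cases "t'' = t'")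
    case ne: False
    \<comment> \<open>a path from t'' avoiding t cannot pass through t' either\<close>
    have "(avoiding t)\<^sup>*\<^sup>* t'' r" using t'' unfolding subtree_def by auto
    then have "(avoiding t')\<^sup>*\<^sup>* t'' r"
    proof (induct rule: rtranclp_induct)
      case (step x y)
      have "y \<noteq> t'"
        using step(1,2) neighbours_not_connected_avoiding[OF t''(1) tt ne]
        by (metis rtranclp.rtrancl_into_rtrancl)
      then have "avoiding t' x y" using step(2) step(3) avoiding_rtranclp_ne[OF step(3)] ne
        unfolding avoiding_def by auto
      then show ?case using step(3) by (meson rtranclp.rtrancl_into_rtrancl)
    qed simp
    moreover have "avoiding t' t t''" using t'' ne tt tree_edge_irrefl unfolding avoiding_def
      by auto
    ultimately show ?thesis unfolding subtree_def
      by (meson converse_rtranclp_into_rtranclp mem_Collect_eq)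
  qed (use t'' in auto)
qed (auto simp: subtree_def)

lemma bags_of_vertex_in_subtree:
  assumes v: "v \<notin> B t" "v < n" and r: "r1 < m" "r2 < m" "v \<in> B r1" "v \<in> B r2"
    and s: "r1 \<in> subtree t t'"
  shows "r2 \<in> subtree t t'"
proof -
  let ?K = "{t. t < m \<and> v \<in> B t}"
  have "(\<lambda>x y. F x y \<and> x \<in> ?K \<and> y \<in> ?K)\<^sup>*\<^sup>* r1 r2"
    using bags_connected[OF v(2)] r unfolding connected_on_def by auto
  then have "(avoiding t)\<^sup>*\<^sup>* r1 r2"
    by (induct rule: rtranclp_induct)
      (use v in \<open>auto simp: avoiding_def intro: rtranclp.rtrancl_into_rtrancl\<close>)
  then show ?thesis using s unfolding subtree_def by auto
qed

lemma branch_bags_in_subtree: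
  assumes "v \<in> branch t t'" "r < m" "v \<in> B r"
  shows "r \<in> subtree t t'"
  using assms bags_of_vertex_in_subtree unfolding branch_def by blast

lemma branch_exists:
  assumes "t < m" "v < n" "v \<notin> B t"
  shows "\<exists>t'. F t t' \<and> v \<in> branch t t'"
proof -
  obtain r where r: "r < m" "v \<in> B r" using vertex_in_bag assms by auto
  then have "r \<noteq> t" using assms by auto
  then obtain t' where "F t t'" "r \<in> subtree t t'" using subtree_exists assms r by blast
  then show ?thesis using r assms unfolding branch_def by auto
qed

lemma edge_in_one_branch:
  assumes e: "E u v" and t: "t < m" "F t t1" "F t t2" and b: "u \<in> branch t t1" "v \<in> branch t t2"
  shows "t1 = t2"
proof -
  obtain r where r: "r < m" "u \<in> B r" "v \<in> B r" using edge_in_bag[OF e] by auto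
  then have "r \<in> subtree t t1" "r \<in> subtree t t2" using b branch_bags_in_subtree by auto
  then show ?thesis using subtree_unique t by blast
qed

definition heavy :: "nat \<Rightarrow> nat \<Rightarrow> bool" where
  "heavy t t' \<longleftrightarrow> 2 * card (branch t t') > n - card (B t)"

lemma light_node_balanced_separation:
  assumes t: "t < m" and light: "\<And>t'. F t t' \<Longrightarrow> \<not> heavy t t'"
  shows "\<exists>cl. balanced_separation n E (B t) cl"
proof -
  define X where "X = {0..<n} - B t"
  have card_X: "card X = n - card (B t)"
    unfolding X_def using bag_subset[OF t] by (simp add: card_Diff_subset finite_subset)
  define g where "g v = (SOME t'. F t t' \<and> v \<in> branch t t')" for v
  have g: "F t (g v) \<and> v \<in> branch t (g v)" if "v \<in> X" for v
    unfolding g_def by (rule someI_ex) (use branch_exists t that in \<open>auto simp: X_def\<close>)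
  have "2 * card {v\<in>X. g v = j} \<le> card X" for j
  proof (cases "F t j")
    case True
    then have "{v\<in>X. g v = j} \<subseteq> branch t j" using g by auto
    then have "card {v\<in>X. g v = j} \<le> card (branch t j)"
      by (rule card_mono[rotated]) (auto simp: branch_def)
    then show ?thesis using light[OF True] card_X unfolding heavy_def by linarith
  next
    case False
    then have "{v\<in>X. g v = j} = {}" using g by auto
    then show ?thesis by (simp only: card.empty mult_0_right le0)
  qed
  moreover have "finite X" unfolding X_def by simp
  ultimately obtain c :: "nat \<Rightarrow> nat"
    where c: "\<And>j. c j < 3" "\<And>i. i < 3 \<Longrightarrow> 2 * card {v\<in>X. c (g v) = i} \<le> card X"
    using balanced_three_colouring[of X g] by auto
  have "{v. v < n \<and> v \<notin> B t \<and> c (g v) = i} = {v\<in>X. c (g v) = i}" for i unfolding X_def by auto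
  moreover have "c (g u) = c (g v)" if "E u v" "u \<notin> B t" "v \<notin> B t" for u v
  proof -
    have "u \<in> X" "v \<in> X" using edge_less[OF that(1)] that unfolding X_def by auto
    then show ?thesis using edge_in_one_branch[OF that(1) t] g by metis
  qed
  ultimately have "balanced_separation n E (B t) (\<lambda>v. c (g v))"
    unfolding balanced_separation_def class_size_def using c card_X by auto
  then show ?thesis by blast
qed

lemma edge_branches:
  assumes tt: "F t t'"
  shows "branch t' t \<inter> branch t t' = {}"
    and "\<And>u v. u \<in> branch t' t \<Longrightarrow> v \<in> branch t t' \<Longrightarrow> \<not> E u v \<and> \<not> E v u"
    and "\<And>v. v < n \<Longrightarrow> v \<notin> B t \<inter> B t' \<Longrightarrow> v \<in> branch t' t \<union> branch t t'"
    and "B t - B t' \<subseteq> branch t' t"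
proof -
  have t: "t < m" "t \<in> subtree t' t" and t': "t' < m" "t' \<in> subtree t t'"
    using tt tree_edge_less unfolding subtree_def by auto
  have sep: "r \<notin> subtree t' t \<or> r \<notin> subtree t t'" for r
    using subtrees_of_edge_disjoint[OF tt] by auto
  show "branch t' t \<inter> branch t t' = {}"
  proof (intro equalityI subsetI)
    fix v assume v: "v \<in> branch t' t \<inter> branch t t'"
    then obtain r where "r < m" "v \<in> B r" unfolding branch_def by auto
    then show "v \<in> {}"
      using branch_bags_in_subtree[of v t' t r] branch_bags_in_subtree[of v t t' r] v sep[of r]
        by blast
  qed simp
  show "\<not> E u v \<and> \<not> E v u" if u: "u \<in> branch t' t" and v: "v \<in> branch t t'" for u v
  proof -
    have "\<not> (u \<in> B r \<and> v \<in> B r)" if "r < m" for r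
      using branch_bags_in_subtree[OF u that] branch_bags_in_subtree[OF v that] sep[of r] by blast
    then show ?thesis using edge_in_bag[of u v] edge_in_bag[of v u] by blast
  qed
  show "v \<in> branch t' t \<union> branch t t'" if v: "v < n" "v \<notin> B t \<inter> B t'" for v
  proof (cases "v \<in> B t'")
    case True
    then show ?thesis using v t' unfolding branch_def by auto
  next
    case False
    obtain r where r: "r < m" "v \<in> B r" using vertex_in_bag v by auto
    from subtrees_of_edge_cover[OF tt r(1)] show ?thesis
    proof
      assume "r \<in> subtree t' t"
      then show ?thesis using r v False unfolding branch_def by auto
    next
      assume "r \<in> subtree t t'"
      then show ?thesis using r v t False unfolding branch_def by auto
    qed
  qed
  show "B t - B t' \<subseteq> branch t' t" using bag_subset[OF t(1)] t unfolding branch_def by auto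
qed

lemma branch_subset: "branch t t' \<subseteq> {0..<n} - B t"
  unfolding branch_def by auto

lemma card_outside_bag:
  assumes tt: "F t t'"
  shows "n - card (B t) = card (branch t' t) - card (B t - B t') + card (branch t t')"
proof -
  define R where "R = branch t' t"
  define R' where "R' = branch t t'"
  define U where "U = B t - B t'"
  have t: "t < m" using tt tree_edge_less by auto
  have RN: "R \<subseteq> {0..<n} - B t'" "R' \<subseteq> {0..<n} - B t" unfolding R_def R'_def by (rule branch_subset)+
  then have fin: "finite R" "finite R'" by (auto intro: finite_subset[OF _ finite_atLeastLessThan])
  have UR: "U \<subseteq> R" unfolding U_def R_def using edge_branches(4)[OF tt] .
  have "{0..<n} - B t = (R - U) \<union> R'"
  proof (intro equalityI subsetI)
    fix v assume "v \<in> {0..<n} - B t"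
    then show "v \<in> (R - U) \<union> R'" using edge_branches(3)[OF tt, of v] unfolding R_def R'_def U_def
      by auto
  next
    fix v assume "v \<in> (R - U) \<union> R'"
    then show "v \<in> {0..<n} - B t" using RN unfolding U_def by auto
  qed
  then have "card ({0..<n} - B t) = card (R - U) + card R'"
    using fin edge_branches(1)[OF tt] unfolding R_def R'_def
      by (simp add: card_Un_disjoint Int_Diff_disjoint Diff_Int_distrib2)
  moreover have "n - card (B t) = card ({0..<n} - B t)"
    using bag_subset[OF t] by (simp add: card_Diff_subset finite_subset)
  moreover have "card (R - U) = card R - card U"
    using UR finite_subset[OF UR fin(1)] by (simp add: card_Diff_subset)
  ultimately show ?thesis unfolding R_def R'_def U_def by simp
qed

lemma heavy_edge_balanced_separation:
  assumes tt: "F t t'" and heavy: "heavy t t'" and le: "card (branch t t') \<le> card (branch t' t)"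
  shows "\<exists>S\<subseteq>B t. \<exists>cl. balanced_separation n E S cl"
proof -
  define R where "R = branch t' t"
  define R' where "R' = branch t t'"
  define U where "U = B t - B t'"
  have t: "t < m" using tt tree_edge_less by auto
  have RN: "R \<subseteq> {0..<n} - B t'" "R' \<subseteq> {0..<n} - B t" unfolding R_def R'_def by (rule branch_subset)+
  then have fin: "finite R" by (auto intro: finite_subset[OF _ finite_atLeastLessThan])
  have UR: "U \<subseteq> R" unfolding U_def R_def using edge_branches(4)[OF tt] .
  \<comment> \<open>as the branch at t' is heavy, U has enough vertices to balance the two sides\<close>
  have "card R - card R' \<le> card U"
    using heavy card_outside_bag[OF tt] card_mono[OF fin UR]
    unfolding heavy_def R_def R'_def U_def by linarith
  then obtain U' where U': "U' \<subseteq> U" "card U' = card R - card R'"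
    by (meson obtain_subset_with_card_n)
  define S where "S = (B t \<inter> B t') \<union> U'"
  have SB: "S \<subseteq> B t" unfolding S_def using U' U_def by auto
  have "{v. v < n \<and> v \<notin> S} = (R - U') \<union> R'"
  proof (intro equalityI subsetI)
    fix v assume "v \<in> {v. v < n \<and> v \<notin> S}"
    then show "v \<in> (R - U') \<union> R'" using edge_branches(3)[OF tt, of v] unfolding S_def R_def R'_def
      by auto
  next
    fix v assume "v \<in> (R - U') \<union> R'"
    then show "v \<in> {v. v < n \<and> v \<notin> S}" using RN SB unfolding S_def by auto
  qed
  moreover have "card (R - U') = card R'"
    using U' UR le finite_subset[OF UR fin] unfolding R_def R'_def
    by (simp add: card_Diff_subset finite_subset)
  moreover have "\<not> E u v \<and> \<not> E v u" if "u \<in> R - U'" "v \<in> R'" for u v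
    using edge_branches(2)[OF tt] that unfolding R_def R'_def by blast
  moreover have "(R - U') \<inter> R' = {}" using edge_branches(1)[OF tt] unfolding R_def R'_def by blast
  ultimately have "balanced_separation n E S (\<lambda>v. if v \<in> R - U' then 0 else 1)"
    using two_sided_balanced_separation[of E n S "R - U'" R'] edge_less SB bag_subset[OF t] by blast
  then show ?thesis using SB by blast
qed

lemma mutually_heavy_edge:
  assumes "\<And>t. t < m \<Longrightarrow> \<exists>t'. F t t' \<and> heavy t t'"
  shows "\<exists>t t'. F t t' \<and> heavy t t' \<and> heavy t' t"
proof -
  define f where "f t = (SOME t'. F t t' \<and> heavy t t')" for t
  have f: "F t (f t) \<and> heavy t (f t)" if "t < m" for t
    unfolding f_def by (rule someI_ex) (use assms that in auto)
  obtain t where "t < m" "f (f t) = t" using tree_successor_backtracks[OF tree] f by blast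
  then show ?thesis using f[of t] f[of "f t"] tree_edge_less by metis
qed

theorem balanced_separation_in_bag:
  "\<exists>t<m. \<exists>S\<subseteq>B t. \<exists>cl. balanced_separation n E S cl"
proof (cases "\<exists>t<m. \<forall>t'. F t t' \<longrightarrow> \<not> heavy t t'")
  case True
  then show ?thesis using light_node_balanced_separation by blast
next
  case False
  then obtain t t' where tt: "F t t'" "heavy t t'" "heavy t' t" using mutually_heavy_edge by blast
  then have "t < m" "t' < m" using tree_edge_less by auto
  then show ?thesis
    using heavy_edge_balanced_separation[OF tt(1,2)] heavy_edge_balanced_separation[OF _ tt(3)]
      tt(1) tree_edge_sym by (meson nat_le_linear)
qed

end

section \<open>The graph Laplacian\<close>

lemma sum_if_const_card:
  "(\<Sum>v<(n::nat). if P v then (c::real) else 0) = c * real (card {v. v < n \<and> P v})"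
proof -
  have "(\<Sum>v<n. if P v then c else 0) = (\<Sum>v\<in>{v \<in> {..<n}. P v}. c)"
    by (rule sum.inter_filter[symmetric]) simp
  also have "{v \<in> {..<n}. P v} = {v. v < n \<and> P v}" by auto
  finally show ?thesis by simp
qed

context
  fixes n :: nat and E :: "nat \<Rightarrow> nat \<Rightarrow> bool"
  assumes simple: "simple_graph n E"
begin

lemma graph_edge_sym: "E u v \<Longrightarrow> E v u"
  and graph_edge_irrefl: "\<not> E u u"
  and graph_edge_less: "E u v \<Longrightarrow> u < n \<and> v < n"
  using simple unfolding simple_graph_def by auto

lemma laplacian_carrier: "laplacian n E \<in> carrier_mat n n"
  unfolding laplacian_def by auto

lemma laplacian_symmetric: "transpose_mat (laplacian n E) = laplacian n E"
  unfolding laplacian_def by (rule eq_matI) (auto dest: graph_edge_sym)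

lemma laplacian_mult_vec:
  assumes x: "x \<in> carrier_vec n" and u: "u < n"
  shows "(laplacian n E *\<^sub>v x) $ u = (\<Sum>v<n. if E u v then x $ u - x $ v else 0)"
proof -
  let ?L = "laplacian n E"
  have "(?L *\<^sub>v x) $ u = (\<Sum>v<n. ?L $$ (u, v) * x $ v)"
    using x u laplacian_carrier by (auto simp: scalar_prod_def lessThan_atLeast0 intro!: sum.cong)
  also have "\<dots> = (\<Sum>v<n. (if u = v then real (degree_g n E u) * x $ u else 0) +
      (if E u v then - x $ v else 0))"
    unfolding laplacian_def using u graph_edge_irrefl by (intro sum.cong) auto
  also have "\<dots> = real (degree_g n E u) * x $ u + (\<Sum>v<n. if E u v then - x $ v else 0)"
    using u by (simp add: sum.distrib)
  also have "real (degree_g n E u) * x $ u = (\<Sum>v<n. if E u v then x $ u else 0)"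
    by (simp add: degree_g_def sum_if_const_card mult.commute)
  also have "(\<Sum>v<n. if E u v then x $ u else 0) + (\<Sum>v<n. if E u v then - x $ v else 0)
      = (\<Sum>v<n. if E u v then x $ u - x $ v else 0)"
    by (simp add: sum.distrib[symmetric] if_distrib) (intro sum.cong, auto)
  finally show ?thesis .
qed

lemma laplacian_quadratic_form:
  assumes x: "x \<in> carrier_vec n"
  shows "x \<bullet> (laplacian n E *\<^sub>v x) = (\<Sum>u<n. \<Sum>v<n. if E u v then (x $ u - x $ v)\<^sup>2 else 0) / 2"
proof -
  define q where "q = (\<Sum>u<n. \<Sum>v<n. if E u v then x $ u * (x $ u - x $ v) else 0)"
  have "x \<bullet> (laplacian n E *\<^sub>v x) = (\<Sum>u<n. x $ u * (laplacian n E *\<^sub>v x) $ u)"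
    using x laplacian_carrier by (simp add: scalar_prod_def lessThan_atLeast0)
  also have "\<dots> = q" unfolding q_def
    by (intro sum.cong refl) (auto simp: laplacian_mult_vec[OF x] sum_distrib_left intro!: sum.cong)
  finally have xq: "x \<bullet> (laplacian n E *\<^sub>v x) = q" .
  \<comment> \<open>each edge is counted from both of its ends\<close>
  have "q = (\<Sum>v<n. \<Sum>u<n. if E u v then x $ u * (x $ u - x $ v) else 0)"
    unfolding q_def by (rule sum.swap)
  also have "\<dots> = (\<Sum>v<n. \<Sum>u<n. if E v u then x $ u * (x $ u - x $ v) else 0)"
    by (intro sum.cong refl) (auto dest: graph_edge_sym)
  finally have q2: "q = (\<Sum>u<n. \<Sum>v<n. if E u v then x $ v * (x $ v - x $ u) else 0)" .
  have "(\<Sum>u<n. \<Sum>v<n. if E u v then (x $ u - x $ v)\<^sup>2 else 0) =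
      (\<Sum>u<n. \<Sum>v<n. (if E u v then x $ u * (x $ u - x $ v) else 0) +
        (if E u v then x $ v * (x $ v - x $ u) else 0))"
    by (intro sum.cong refl) (auto simp: power2_eq_square algebra_simps)
  also have "\<dots> = (\<Sum>u<n. \<Sum>v<n. if E u v then x $ u * (x $ u - x $ v) else 0) +
      (\<Sum>u<n. \<Sum>v<n. if E u v then x $ v * (x $ v - x $ u) else 0)"
    by (simp add: sum.distrib)
  also have "\<dots> = q + q" using q2 unfolding q_def by simp
  finally show ?thesis using xq by simp
qed

lemma laplacian_psd: "x \<in> carrier_vec n \<Longrightarrow> x \<bullet> (laplacian n E *\<^sub>v x) \<ge> 0"
  by (simp add: laplacian_quadratic_form sum_nonneg)

lemma laplacian_mult_ones: "laplacian n E *\<^sub>v vec n (\<lambda>_. 1) = 0\<^sub>v n"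
proof (rule eq_vecI)
  fix i assume "i < dim_vec (0\<^sub>v n :: real vec)"
  then have i: "i < n" by simp
  have "(laplacian n E *\<^sub>v vec n (\<lambda>_. 1)) $ i =
      (\<Sum>v<n. if E i v then vec n (\<lambda>_. 1 :: real) $ i - vec n (\<lambda>_. 1) $ v else 0)"
    by (rule laplacian_mult_vec) (use i in auto)
  also have "\<dots> = 0" using i by (intro sum.neutral) auto
  finally show "(laplacian n E *\<^sub>v vec n (\<lambda>_. 1)) $ i = 0\<^sub>v n $ i" using i by simp
qed (simp add: laplacian_def)

lemma lambda2_nonneg: "n \<ge> 2 \<Longrightarrow> lambda2 n E \<ge> 0"
  unfolding lambda2_def laplacian_eigenvalues_def
  using psd_sorted_eigenvalue_nonneg[OF laplacian_carrier laplacian_symmetric laplacian_psd] by simp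

lemma lambda2_Rayleigh_bound:
  assumes "n \<ge> 2" "x \<in> carrier_vec n" "x \<bullet> vec n (\<lambda>_. 1) = 0"
  shows "lambda2 n E * (x \<bullet> x) \<le> x \<bullet> (laplacian n E *\<^sub>v x)"
proof -
  have "vec n (\<lambda>_. 1) $ 0 \<noteq> (0\<^sub>v n :: real vec) $ 0" using assms(1) by simp
  then have "vec n (\<lambda>_. 1) \<noteq> (0\<^sub>v n :: real vec)" by metis
  then show ?thesis
    unfolding lambda2_def laplacian_eigenvalues_def
    using second_eigenvalue_Rayleigh_bound[OF laplacian_carrier laplacian_symmetric laplacian_psd
        _ _ laplacian_mult_ones] assms by auto
qed

lemma degree_le_max_degree: "u < n \<Longrightarrow> degree_g n E u \<le> max_degree n E"
  unfolding max_degree_def by (rule Max_ge) auto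

lemma laplacian_energy_le_boundary:
  assumes x: "x \<in> carrier_vec n" and y: "y \<in> carrier_vec n" and S: "S \<subseteq> {0..<n}"
    and edge: "\<And>u v. u < n \<Longrightarrow> v < n \<Longrightarrow> E u v \<Longrightarrow>
      (x $ u - x $ v)\<^sup>2 + (y $ u - y $ v)\<^sup>2 \<le> (if u \<in> S then 1 else 0) + (if v \<in> S then 1 else 0)"
  shows "x \<bullet> (laplacian n E *\<^sub>v x) + y \<bullet> (laplacian n E *\<^sub>v y) \<le>
    real (card S) * real (max_degree n E)"
proof -
  let ?I = "\<lambda>u. if u \<in> S then 1 else (0 :: real)"
  have "x \<bullet> (laplacian n E *\<^sub>v x) + y \<bullet> (laplacian n E *\<^sub>v y) =
      (\<Sum>u<n. \<Sum>v<n. if E u v then (x $ u - x $ v)\<^sup>2 + (y $ u - y $ v)\<^sup>2 else 0) / 2"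
  proof -
    have "(\<Sum>u<n. \<Sum>v<n. if E u v then (x $ u - x $ v)\<^sup>2 + (y $ u - y $ v)\<^sup>2 else 0) =
        (\<Sum>u<n. \<Sum>v<n. if E u v then (x $ u - x $ v)\<^sup>2 else 0) +
        (\<Sum>u<n. \<Sum>v<n. if E u v then (y $ u - y $ v)\<^sup>2 else 0)"
      unfolding sum.distrib[symmetric] by (intro sum.cong refl) simp
    then show ?thesis
      unfolding laplacian_quadratic_form[OF x] laplacian_quadratic_form[OF y]
      by (simp only: add_divide_distrib)
  qed
  also have "(\<Sum>u<n. \<Sum>v<n. if E u v then (x $ u - x $ v)\<^sup>2 + (y $ u - y $ v)\<^sup>2 else 0)
      \<le> (\<Sum>u<n. \<Sum>v<n. if E u v then ?I u + ?I v else 0)"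
    by (intro sum_mono) (use edge in auto)
  also have "\<dots> = (\<Sum>u<n. \<Sum>v<n. if E u v then ?I u else 0) + (\<Sum>u<n. \<Sum>v<n. if E u v then ?I v else 0)"
    unfolding sum.distrib[symmetric] by (intro sum.cong refl) simp
  also have "(\<Sum>u<n. \<Sum>v<n. if E u v then ?I v else 0) = (\<Sum>v<n. \<Sum>u<n. if E u v then ?I v else 0)"
    by (rule sum.swap)
  also have "\<dots> = (\<Sum>u<n. \<Sum>v<n. if E u v then ?I u else 0)"
    by (intro sum.cong refl) (auto dest: graph_edge_sym)
  also have "(\<Sum>u<n. \<Sum>v<n. if E u v then ?I u else 0) = (\<Sum>u<n. ?I u * real (degree_g n E u))"
    by (intro sum.cong refl) (auto simp: degree_g_def sum_if_const_card)
  also have "\<dots> \<le> (\<Sum>u<n. ?I u * real (max_degree n E))"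
    by (intro sum_mono) (use degree_le_max_degree in auto)
  also have "\<dots> = real (card S) * real (max_degree n E)"
  proof -
    have "{u. u < n \<and> u \<in> S} = S" using S by auto
    then show ?thesis
      using sum_if_const_card[where n = n and P = "\<lambda>u. u \<in> S" and c = 1]
        by (simp add: sum_distrib_right[symmetric])
  qed
  finally show ?thesis by simp
qed

end

section \<open>Test vectors from a balanced separation\<close>

lemma triangle_unit_vectors_pos:
  fixes w0 w1 w2 :: real
  assumes p: "w0 > 0" "w1 > 0" "w2 > 0" and tri: "w2 \<le> w0 + w1" "\<bar>w0 - w1\<bar> \<le> w2"
  shows "\<exists>c1 d1 c2 d2. c1\<^sup>2 + d1\<^sup>2 = 1 \<and> c2\<^sup>2 + d2\<^sup>2 = 1 \<and>
     w0 + w1 * c1 + w2 * c2 = 0 \<and> w1 * d1 + w2 * d2 = 0"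
proof -
  \<comment> \<open>law of cosines: c1 is chosen such that w0 + w1 (c1, d1) has length w2\<close>
  define c1 where "c1 = (w2\<^sup>2 - w0\<^sup>2 - w1\<^sup>2) / (2 * w0 * w1)"
  have "w2\<^sup>2 \<le> (w0 + w1)\<^sup>2" using tri(1) p by (intro power_mono) auto
  moreover have "\<bar>w0 - w1\<bar>\<^sup>2 \<le> w2\<^sup>2" using tri(2) by (intro power_mono) auto
  ultimately have "\<bar>w2\<^sup>2 - w0\<^sup>2 - w1\<^sup>2\<bar> \<le> 2 * w0 * w1"
    by (simp add: power2_eq_square algebra_simps abs_le_iff)
  then have "\<bar>c1\<bar> \<le> 1" unfolding c1_def using p by (simp add: abs_div divide_le_eq)
  then have c1_sq: "c1\<^sup>2 \<le> 1" by (metis abs_le_square_iff abs_one one_power2)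
  define d1 where "d1 = sqrt (1 - c1\<^sup>2)"
  have cd1: "c1\<^sup>2 + d1\<^sup>2 = 1" unfolding d1_def using c1_sq by simp
  define c2 where "c2 = - (w0 + w1 * c1) / w2"
  define d2 where "d2 = - (w1 * d1) / w2"
  have "2 * w0 * w1 * c1 = w2\<^sup>2 - w0\<^sup>2 - w1\<^sup>2" unfolding c1_def using p by simp
  then have key: "w0\<^sup>2 + 2 * w0 * w1 * c1 + w1\<^sup>2 = w2\<^sup>2" by linarith
  have "c2\<^sup>2 + d2\<^sup>2 = ((w0 + w1 * c1)\<^sup>2 + (w1 * d1)\<^sup>2) / w2\<^sup>2" unfolding c2_def d2_def
    by (simp add: power_divide add_divide_distrib power2_eq_square algebra_simps)
  also have "(w0 + w1 * c1)\<^sup>2 + (w1 * d1)\<^sup>2 = w0\<^sup>2 + 2 * w0 * w1 * c1 + w1\<^sup>2 * (c1\<^sup>2 + d1\<^sup>2)"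
    by (simp add: power2_eq_square algebra_simps)
  also have "\<dots> = w2\<^sup>2" using key cd1 by simp
  finally have "c2\<^sup>2 + d2\<^sup>2 = 1" using p by simp
  moreover have "w0 + w1 * c1 + w2 * c2 = 0" "w1 * d1 + w2 * d2 = 0"
    unfolding c2_def d2_def using p by (simp_all add: field_simps)
  ultimately show ?thesis using cd1 by blast
qed

lemma triangle_unit_vectors:
  fixes w0 w1 w2 :: real
  assumes nn: "w0 \<ge> 0" "w1 \<ge> 0" "w2 \<ge> 0"
    and h: "2 * w0 \<le> w0 + w1 + w2" "2 * w1 \<le> w0 + w1 + w2" "2 * w2 \<le> w0 + w1 + w2"
  shows "\<exists>c0 d0 c1 d1 c2 d2. c0\<^sup>2 + d0\<^sup>2 = 1 \<and> c1\<^sup>2 + d1\<^sup>2 = 1 \<and> c2\<^sup>2 + d2\<^sup>2 = 1 \<and>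
     w0 * c0 + w1 * c1 + w2 * c2 = 0 \<and> w0 * d0 + w1 * d1 + w2 * d2 = 0"
proof (cases "w0 = 0 \<or> w1 = 0 \<or> w2 = 0")
  case True
  \<comment> \<open>two equal weights remain; give them opposite unit vectors\<close>
  then consider "w0 = 0" "w1 = w2" | "w1 = 0" "w0 = w2" | "w2 = 0" "w0 = w1" using h by linarith
  then show ?thesis
  proof cases
    case 1
    then show ?thesis
      by (intro exI[of _ 1] exI[of _ 0] exI[of _ 1] exI[of _ 0] exI[of _ "-1"] exI[of _ 0]) auto
  next
    case 2
    then show ?thesis
      by (intro exI[of _ 1] exI[of _ 0] exI[of _ 1] exI[of _ 0] exI[of _ "-1"] exI[of _ 0]) auto
  next
    case 3
    then show ?thesis
      by (intro exI[of _ 1] exI[of _ 0] exI[of _ "-1"] exI[of _ 0] exI[of _ 1] exI[of _ 0]) auto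
  qed
next
  case False
  then have "w0 > 0" "w1 > 0" "w2 > 0" using nn by auto
  moreover have "w2 \<le> w0 + w1" "\<bar>w0 - w1\<bar> \<le> w2" using h by auto
  ultimately obtain c1 d1 c2 d2 where "c1\<^sup>2 + d1\<^sup>2 = 1" "c2\<^sup>2 + d2\<^sup>2 = 1"
    "w0 + w1 * c1 + w2 * c2 = 0" "w1 * d1 + w2 * d2 = 0"
    using triangle_unit_vectors_pos by blast
  then show ?thesis
    by (intro exI[of _ 1] exI[of _ 0] exI[of _ c1] exI[of _ d1] exI[of _ c2] exI[of _ d2]) auto
qed

lemma sum_over_classes:
  fixes g :: "nat \<Rightarrow> real" and cl :: "nat \<Rightarrow> nat"
  assumes cl3: "\<forall>v. cl v < 3"
  shows "(\<Sum>v<n. if v \<in> S then 0 else g (cl v)) = (\<Sum>i<3. g i * real (class_size n S cl i))"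
proof -
  have "(\<Sum>v<n. if v \<in> S then 0 else g (cl v)) = (\<Sum>v<n. \<Sum>i<3. if v \<notin> S \<and> cl v = i then g i else 0)"
  proof (intro sum.cong refl)
    fix v
    show "(if v \<in> S then 0 else g (cl v)) = (\<Sum>i<3. if v \<notin> S \<and> cl v = i then g i else 0)"
    proof (cases "v \<in> S")
      case False
      have "(\<Sum>i<3. if v \<notin> S \<and> cl v = i then g i else 0) = (\<Sum>i<3. if cl v = i then g i else 0)"
        using False by simp
      also have "\<dots> = g (cl v)" using cl3 by (simp add: sum.delta')
      finally show ?thesis using False by simp
    qed simp
  qed
  also have "\<dots> = (\<Sum>i<3. \<Sum>v<n. if v \<notin> S \<and> cl v = i then g i else 0)" by (rule sum.swap)
  also have "\<dots> = (\<Sum>i<3. g i * real (class_size n S cl i))"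
    unfolding class_size_def by (intro sum.cong refl) (rule sum_if_const_card)
  finally show ?thesis .
qed

lemma class_sizes_sum:
  assumes cl3: "\<forall>v. cl v < 3" and S: "S \<subseteq> {0..<n}"
  shows "real (class_size n S cl 0) + real (class_size n S cl 1) + real (class_size n S cl 2) =
    real n - real (card S)"
proof -
  have "(\<Sum>i<3. 1 * real (class_size n S cl i)) = (\<Sum>v<n. if v \<in> S then 0 else 1)"
    using sum_over_classes[OF cl3, where n = n and S = S and g = "\<lambda>_. 1"] by simp
  also have "\<dots> = (\<Sum>v<n. if v \<notin> S then 1 else 0)" by (intro sum.cong) auto
  also have "\<dots> = real (card {v. v < n \<and> v \<notin> S})" by (simp add: sum_if_const_card)
  also have "{v. v < n \<and> v \<notin> S} = {0..<n} - S" by auto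
  finally show ?thesis
    using S finite_subset[OF S] card_mono[OF _ S]
    by (simp add: card_Diff_subset of_nat_diff eval_nat_numeral)
qed

lemma scalar_prod_vec_ones: "vec n f \<bullet> vec n (\<lambda>_. 1) = (\<Sum>v<n. f v :: real)"
  by (simp add: scalar_prod_def lessThan_atLeast0)

lemma scalar_prod_vec_self: "vec n f \<bullet> vec n f = (\<Sum>v<n. (f v)\<^sup>2 :: real)"
  by (simp add: scalar_prod_def lessThan_atLeast0 power2_eq_square)

lemma balanced_separation_unit_vectors:
  assumes sep: "balanced_separation n E S cl" and S: "S \<subseteq> {0..<n}"
  obtains c d :: "nat \<Rightarrow> real" where "\<And>i. (c i)\<^sup>2 + (d i)\<^sup>2 = 1"
    "(\<Sum>i<3. c i * real (class_size n S cl i)) = 0" "(\<Sum>i<3. d i * real (class_size n S cl i)) = 0"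
proof -
  have cl3: "\<forall>v. cl v < 3" and small: "\<And>i. i < 3 \<Longrightarrow> 2 * class_size n S cl i \<le> n - card S"
    using sep unfolding balanced_separation_def by auto
  have card_S: "card S \<le> n" using card_mono[OF _ S] by simp
  define W where "W i = real (class_size n S cl i)" for i
  have sum_W: "W 0 + W 1 + W 2 = real n - real (card S)"
    unfolding W_def by (rule class_sizes_sum[OF cl3 S])
  \<comment> \<open>the balance condition says that the three class sizes satisfy the triangle inequality\<close>
  have W_nn: "W i \<ge> 0" for i unfolding W_def by simp
  have W_le: "2 * W i \<le> W 0 + W 1 + W 2" if "i < 3" for i
  proof -
    have "2 * W i \<le> real (n - card S)" using small[OF that] unfolding W_def by linarith
    then show ?thesis unfolding sum_W using card_S by (simp add: of_nat_diff)
  qed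
  obtain c0 d0 c1 d1 c2 d2 where unit: "c0\<^sup>2 + d0\<^sup>2 = 1" "c1\<^sup>2 + d1\<^sup>2 = 1" "c2\<^sup>2 + d2\<^sup>2 = 1"
    and balance: "W 0 * c0 + W 1 * c1 + W 2 * c2 = 0" "W 0 * d0 + W 1 * d1 + W 2 * d2 = 0"
    using triangle_unit_vectors[OF W_nn W_nn W_nn W_le[of 0] W_le[of 1] W_le[of 2]] by auto
  define c where "c i = (if i = 0 then c0 else if i = 1 then c1 else c2)" for i :: nat
  define d where "d i = (if i = 0 then d0 else if i = 1 then d1 else d2)" for i :: nat
  have "(c i)\<^sup>2 + (d i)\<^sup>2 = 1" for i unfolding c_def d_def using unit by auto
  moreover have "(\<Sum>i<3. c i * W i) = 0" "(\<Sum>i<3. d i * W i) = 0"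
    unfolding c_def d_def using balance by (simp_all add: eval_nat_numeral mult.commute)
  ultimately show ?thesis using that unfolding W_def by blast
qed

lemma balanced_separation_test_vectors:
  assumes sep: "balanced_separation n E S cl" and S: "S \<subseteq> {0..<n}"
  obtains x y :: "real vec" where "x \<in> carrier_vec n" "y \<in> carrier_vec n"
    "x \<bullet> vec n (\<lambda>_. 1) = 0" "y \<bullet> vec n (\<lambda>_. 1) = 0" "x \<bullet> x + y \<bullet> y = real n - real (card S)"
    "\<And>u v. u < n \<Longrightarrow> v < n \<Longrightarrow> E u v \<Longrightarrow>
      (x $ u - x $ v)\<^sup>2 + (y $ u - y $ v)\<^sup>2 \<le> (if u \<in> S then 1 else 0) + (if v \<in> S then 1 else 0)"
proof -
  have cl3: "\<forall>v. cl v < 3" and same: "\<And>u v. E u v \<Longrightarrow> u \<notin> S \<Longrightarrow> v \<notin> S \<Longrightarrow> cl u = cl v"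
    using sep unfolding balanced_separation_def by auto
  obtain c d where cd: "\<And>i. (c i)\<^sup>2 + (d i)\<^sup>2 = 1"
    and balance: "(\<Sum>i<3. c i * real (class_size n S cl i)) = 0"
      "(\<Sum>i<3. d i * real (class_size n S cl i)) = 0"
    using balanced_separation_unit_vectors[OF sep S] by blast
  define x where "x = vec n (\<lambda>v. if v \<in> S then 0 else c (cl v))"
  define y where "y = vec n (\<lambda>v. if v \<in> S then 0 else d (cl v))"
  have x1: "x \<bullet> vec n (\<lambda>_. 1) = 0" and y1: "y \<bullet> vec n (\<lambda>_. 1) = 0"
    unfolding x_def y_def scalar_prod_vec_ones sum_over_classes[OF cl3] using balance by simp_all
  have "x \<bullet> x + y \<bullet> y = (\<Sum>v<n. if v \<in> S then 0 else (c (cl v))\<^sup>2 + (d (cl v))\<^sup>2)"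
    unfolding x_def y_def scalar_prod_vec_self sum.distrib[symmetric] by (rule sum.cong) auto
  also have "\<dots> = (\<Sum>i<3. real (class_size n S cl i))"
    using sum_over_classes[OF cl3, where g = "\<lambda>i. (c i)\<^sup>2 + (d i)\<^sup>2"] cd by simp
  finally have norm: "x \<bullet> x + y \<bullet> y = real n - real (card S)"
    using class_sizes_sum[OF cl3 S] by (simp add: eval_nat_numeral)
  \<comment> \<open>edges with both ends outside S stay inside one class and contribute nothing\<close>
  have "(x $ u - x $ v)\<^sup>2 + (y $ u - y $ v)\<^sup>2 \<le> (if u \<in> S then 1 else 0) + (if v \<in> S then 1 else 0)"
    if "u < n" "v < n" "E u v" for u v
  proof -
    have "x $ u = (if u \<in> S then 0 else c (cl u))" "y $ u = (if u \<in> S then 0 else d (cl u))"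
      "x $ v = (if v \<in> S then 0 else c (cl v))" "y $ v = (if v \<in> S then 0 else d (cl v))"
      unfolding x_def y_def using that by auto
    moreover have "u \<notin> S \<Longrightarrow> v \<notin> S \<Longrightarrow> cl u = cl v" using same[OF that(3)] .
    ultimately show ?thesis using cd[of "cl u"] cd[of "cl v"]
      by (cases "u \<in> S"; cases "v \<in> S") simp_all
  qed
  moreover have "x \<in> carrier_vec n" "y \<in> carrier_vec n" unfolding x_def y_def by simp_all
  ultimately show ?thesis using that x1 y1 norm by blast
qed

section \<open>Treewidth\<close>

context
  fixes n :: nat and E :: "nat \<Rightarrow> nat \<Rightarrow> bool"
  assumes simple: "simple_graph n E"
begin

lemma balanced_separation_lambda2_bound:
  assumes n: "n \<ge> 2" and sep: "balanced_separation n E S cl" and S: "S \<subseteq> {0..<n}"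
  shows "lambda2 n E * (real n - real (card S)) \<le> real (card S) * real (max_degree n E)"
proof -
  obtain x y where xy: "x \<in> carrier_vec n" "y \<in> carrier_vec n"
    "x \<bullet> vec n (\<lambda>_. 1) = 0" "y \<bullet> vec n (\<lambda>_. 1) = 0" "x \<bullet> x + y \<bullet> y = real n - real (card S)"
    and edge: "\<And>u v. u < n \<Longrightarrow> v < n \<Longrightarrow> E u v \<Longrightarrow>
      (x $ u - x $ v)\<^sup>2 + (y $ u - y $ v)\<^sup>2 \<le> (if u \<in> S then 1 else 0) + (if v \<in> S then 1 else 0)"
    using balanced_separation_test_vectors[OF sep S] by blast
  have "lambda2 n E * (real n - real (card S)) \<le>
      x \<bullet> (laplacian n E *\<^sub>v x) + y \<bullet> (laplacian n E *\<^sub>v y)"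
    unfolding xy(5)[symmetric] distrib_left
    using lambda2_Rayleigh_bound[OF simple n xy(1,3)] lambda2_Rayleigh_bound[OF simple n xy(2,4)]
    by linarith
  also have "\<dots> \<le> real (card S) * real (max_degree n E)"
    by (rule laplacian_energy_le_boundary[OF simple xy(1,2) S edge])
  finally show ?thesis .
qed

lemma max_degree_pos_imp_two_vertices:
  assumes "n > 0" "max_degree n E \<ge> 1"
  shows "n \<ge> 2"
proof -
  have "max_degree n E \<in> degree_g n E ` {0..<n}"
    unfolding max_degree_def using assms(1) by (intro Max_in) auto
  then obtain u where u: "u < n" "card {v. v < n \<and> E u v} \<ge> 1"
    using assms(2) unfolding degree_g_def by auto
  then have "{v. v < n \<and> E u v} \<noteq> {}" using card_gt_0_iff[of "{v. v < n \<and> E u v}"] by linarith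
  then obtain v where "v < n" "E u v" by blast
  then show ?thesis using u graph_edge_irrefl[OF simple, of u] by (cases "u = v") auto
qed

lemma treewidth_attained:
  "\<exists>m F B. tree_decomposition n E m F B \<and> decomposition_width m B = treewidth n E"
proof -
  \<comment> \<open>a single bag holding all vertices is a tree decomposition, so the LEAST is attained\<close>
  have "tree_decomposition n E 1 (\<lambda>_ _. False) (\<lambda>_. {0..<n})"
    unfolding tree_decomposition_def is_tree_def simple_graph_def connected_on_def is_cycle_def
    using graph_edge_less[OF simple] by auto
  then have "\<exists>k m F B. tree_decomposition n E m F B \<and> decomposition_width m B = k" by blast
  from LeastI_ex[OF this] show ?thesis unfolding treewidth_def by blast
qed

end

lemma card_bag_le_decomposition_width:
  assumes "t < m"
  shows "card (B t) \<le> decomposition_width m B + 1"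
proof -
  have "card (B t) \<le> Max ((\<lambda>t. card (B t)) ` {0..<m})" by (rule Max_ge) (use assms in auto)
  then show ?thesis unfolding decomposition_width_def by linarith
qed

theorem theorem1:
  fixes n :: nat and E :: "nat \<Rightarrow> nat \<Rightarrow> bool"
  assumes "simple_graph n E"
    and "max_degree n E \<ge> 1"
  shows "real (treewidth n E) \<ge>
           real n * lambda2 n E / (real (max_degree n E) + lambda2 n E) - 1"
proof (cases "n = 0")
  case False
  then have n: "n \<ge> 2" using max_degree_pos_imp_two_vertices[OF assms(1)] assms(2) by simp
  obtain m F B where td: "tree_decomposition n E m F B"
    and width: "decomposition_width m B = treewidth n E"
    using treewidth_attained[OF assms(1)] by blast
  interpret tree_decomp n E m F B by (rule tree_decomp.intro[OF td])
  obtain t S cl where t: "t < m" and S: "S \<subseteq> B t" and sep: "balanced_separation n E S cl"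
    using balanced_separation_in_bag by blast
  have fin: "finite (B t)" using finite_subset[OF bag_subset[OF t]] by simp
  have "card S \<le> card (B t)" using card_mono[OF fin S] .
  also have "\<dots> \<le> treewidth n E + 1"
    using card_bag_le_decomposition_width[of t m B] t width by simp
  finally have card_S: "real (card S) \<le> real (treewidth n E) + 1" by linarith
  have "lambda2 n E * real n \<le> real (card S) * (real (max_degree n E) + lambda2 n E)"
    using balanced_separation_lambda2_bound[OF assms(1) n sep] S bag_subset[OF t]
    by (simp add: algebra_simps)
  moreover have "real (max_degree n E) + lambda2 n E > 0"
    using assms(2) lambda2_nonneg[OF assms(1) n] by simp
  ultimately have "real n * lambda2 n E / (real (max_degree n E) + lambda2 n E) \<le> real (card S)"
    by (simp add: divide_le_eq mult.commute)
  then show ?thesis using card_S by simp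
qed simp

end
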